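(* There is an absolute constant $C>0$ such that the following holds. Let $A\in\mathbb{R}^{m\times n}$ be nonzero, let $b\in\mathbb{R}^m$ be such that $Ax=b$ is consistent, and let $x_\star=A^\dagger b$. Let $0<\delta,\varepsilon<1$ and let $\mathbf{S}\in\mathbb{R}^{d\times m}$ be a count sketch transform with $d\ge C n^2/(\delta\varepsilon^2)$ rows (and $d<m$). Let $x_0\in\mathrm{R}(A^T)$ and let $\{x_k\}_{k\ge 0}$ be generated by the CSK method. Then, with probability at least $1-2\delta$ over the draw of $\mathbf{S}$, for every $k\ge 0$, $$\|x_{k+1}-x_\star\|_2^2\le\left(1-\frac{(1-\varepsilon)^3}{n}\cdot\frac{\sigma_r^2(A)}{\|A\|_2^2}\right)\|x_k-x_\star\|_2^2 .$$
   Context: Count sketch transform: $\mathbf{S}=\Phi D\in\mathbb{R}^{d\times m}$, where $D$ is an $m\times m$ random diagonal matrix whose diagonal entries are independent and equal to $+1$ or $-1$ with probability $1/2$ each, and $\Phi\in\{0,1\}^{d\times m}$ has $\Phi_{h(i),i}=1$ for each $i\in\{1,\dots,m\}$ and all other entries $0$, where $h:\{1,\dots,m\}\to\{1,\dots,d\}$ is a random map with $h(i)$ independent and uniformly distributed on $\{1,\dots,d\}$ for each $i$ (independent of $D$). CSK method: set $\widetilde A=\mathbf{S}A$, $\widetilde b=\mathbf{S}b$; for $k=0,1,2,\dots$ choose $i_k\in\arg\max_{i}\frac{|\widetilde b^{(i)}-\widetilde A^{(i)}x_k|}{\|\widetilde A^{(i)}\|_2}$, the maximum taken over those $i\in\{1,\dots,d\}$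 with $\widetilde A^{(i)}\neq 0$, and set $x_{k+1}=x_k+\frac{\widetilde b^{(i_k)}-\widetilde A^{(i_k)}x_k}{\|\widetilde A^{(i_k)}\|_2^2}(\widetilde A^{(i_k)})^T$. Here $M^{(i)}$ denotes the $i$th row of a matrix $M$ (or $i$th entry of a vector). Notation: $A^\dagger$ is the Moore–Penrose pseudoinverse, $\mathrm{R}(A^T)$ the column space of $A^T$, $\sigma_r(A)$ the smallest nonzero singular value of $A$, $\|\cdot\|_2$ the Euclidean/spectral norm. *)

theory Defs
  imports "HOL-Probability.Probability_Mass_Function" "Jordan_Normal_Form.Char_Poly"
begin

definition vnorm :: "real vec \<Rightarrow> real" where
  "vnorm v = sqrt (scalar_prod v v)"

definition spec_norm :: "real mat \<Rightarrow> real" where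
  "spec_norm A = Sup {vnorm (A *\<^sub>v x) | x. x \<in> carrier_vec (dim_col A) \<and> vnorm x \<le> 1}"

text \<open>Smallest nonzero singular value: the square root of the smallest nonzero
  eigenvalue of A^T A (the singular values of A are the square roots of the eigenvalues of A^T A).\<close>
definition sigma_min_nz :: "real mat \<Rightarrow> real" where
  "sigma_min_nz A = sqrt (Min {l. eigenvalue (transpose_mat A * A) l \<and> l \<noteq> 0})"

definition pinv :: "real mat \<Rightarrow> real mat" where
  "pinv A = (THE X. X \<in> carrier_mat (dim_col A) (dim_row A) \<and>
       A * X * A = A \<and> X * A * X = X \<and>
       transpose_mat (A * X) = A * X \<and> transpose_mat (X * A) = X * A)"

definition row_space :: "real mat \<Rightarrow> real vec set" where
  "row_space A = {transpose_mat A *\<^sub>v y | y. y \<in> carrier_vec (dim_row A)}"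

text \<open>Count sketch matrix S = Phi D (d x m), given the hash map h (values in {0..<d})
  and the diagonal signs s (values in {-1,1}); indices are 0-based.\<close>
definition count_sketch :: "nat \<Rightarrow> nat \<Rightarrow> (nat \<Rightarrow> nat) \<Rightarrow> (nat \<Rightarrow> real) \<Rightarrow> real mat" where
  "count_sketch d m h s = mat d m (\<lambda>(i, j). if h j = i then s j else 0)"

text \<open>Sample space of the count sketch: h uniform on {0..<d}^m, signs uniform on {-1,1}^m,
  all independent (uniform distribution on the product).\<close>
definition cs_space :: "nat \<Rightarrow> nat \<Rightarrow> ((nat \<Rightarrow> nat) \<times> (nat \<Rightarrow> real)) set" where
  "cs_space d m = (PiE {0..<m} (\<lambda>_. {0..<d})) \<times> (PiE {0..<m} (\<lambda>_. {-1, 1}))"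

definition csk_ratio :: "real mat \<Rightarrow> real vec \<Rightarrow> real vec \<Rightarrow> nat \<Rightarrow> real" where
  "csk_ratio At bt x i = \<bar>bt $ i - scalar_prod (row At i) x\<bar> / vnorm (row At i)"

text \<open>x is a sequence generated by the CSK (greedy Kaczmarz) iteration on the sketched
  system (At, bt); ties in the argmax may be broken arbitrarily.\<close>
definition csk_seq :: "real mat \<Rightarrow> real vec \<Rightarrow> (nat \<Rightarrow> real vec) \<Rightarrow> bool" where
  "csk_seq At bt x \<longleftrightarrow> (\<forall>k. \<exists>i < dim_row At.
      row At i \<noteq> 0\<^sub>v (dim_col At) \<and>
      (\<forall>j < dim_row At. row At j \<noteq> 0\<^sub>v (dim_col At) \<longrightarrow>
          csk_ratio At bt (x k) j \<le> csk_ratio At bt (x k) i) \<and>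
      x (Suc k) = x k + ((bt $ i - scalar_prod (row At i) (x k)) / (vnorm (row At i))\<^sup>2)
                          \<cdot>\<^sub>v row At i)"

end

theory Submission
  imports Defs "Jordan_Normal_Form.Spectral_Radius"
begin

(* The minimum-norm solution x_* = pinv A b also solves the sketched system S A x = S b,
   and all iterates stay in the row space of A, hence so does the error e.
   If S is an epsilon-subspace embedding for the column space of A, one greedy projection
   decreases |e|^2 by at least |S A e|^2 / |S A|_F^2, which is at least
   (1 - eps) sigma_r^2 |e|^2 / ((1 + eps) n |A|^2); as (1 - eps)^2 (1 + eps) <= 1, this gives
   the stated rate.
   For an orthonormal basis U of the column space, S is such an embedding as soon as
   U^T S^T S U - I has Frobenius norm at most eps. A fourth-moment computation over the
   random hash and signs bounds the expected squared norm by 2 n^2 / d, so by Markov's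
   inequality this fails with probability at most delta. *)

no_notation Inner_Product.inner (infix "\<bullet>" 70)

lemma scalar_prod_self_nonneg: "0 \<le> (x :: real vec) \<bullet> x"
  using conjugate_square_ge_0_vec[of x] by simp

lemma scalar_prod_self_eq_0_iff:
  "(x :: real vec) \<in> carrier_vec N \<Longrightarrow> x \<bullet> x = 0 \<longleftrightarrow> x = 0\<^sub>v N"
  using conjugate_square_eq_0_vec[of x N] by simp

lemma scalar_prod_self_pos_iff:
  "(x :: real vec) \<in> carrier_vec N \<Longrightarrow> 0 < x \<bullet> x \<longleftrightarrow> x \<noteq> 0\<^sub>v N"
  using conjugate_square_greater_0_vec[of x N] by simp

lemma scalar_prod_self_eq_sum: "(x :: real vec) \<bullet> x = (\<Sum>i<dim_vec x. (x $ i)\<^sup>2)"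
  unfolding scalar_prod_def by (simp add: power2_eq_square lessThan_atLeast0)

lemma vnorm_square: "(vnorm x)\<^sup>2 = x \<bullet> x"
  unfolding vnorm_def using scalar_prod_self_nonneg by simp

lemma scalar_prod_Cauchy_Schwarz:
  fixes v w :: "real vec"
  assumes "dim_vec v = dim_vec w"
  shows "(v \<bullet> w)\<^sup>2 \<le> (v \<bullet> v) * (w \<bullet> w)"
  using Cauchy_Schwarz_ineq_sum[of "\<lambda>i. v $ i" "\<lambda>i. w $ i" "{0..<dim_vec w}"] assms
  unfolding scalar_prod_def by (simp add: power2_eq_square)

lemma scalar_prod_gram_mat:
  fixes B :: "real mat"
  assumes B: "B \<in> carrier_mat m r" and c: "c \<in> carrier_vec r"
  shows "c \<bullet> ((transpose_mat B * B) *\<^sub>v c) = (B *\<^sub>v c) \<bullet> (B *\<^sub>v c)"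
proof -
  have Bc: "B *\<^sub>v c \<in> carrier_vec m" using B c by simp
  have "(transpose_mat B * B) *\<^sub>v c = transpose_mat B *\<^sub>v (B *\<^sub>v c)"
    by (rule assoc_mult_mat_vec) (use B c in auto)
  moreover have "(transpose_mat B *\<^sub>v (B *\<^sub>v c)) \<bullet> c = (B *\<^sub>v c) \<bullet> (B *\<^sub>v c)"
    by (rule transpose_vec_mult_scalar[OF B c Bc])
  ultimately show ?thesis
    using comm_scalar_prod[of c r "transpose_mat B *\<^sub>v (B *\<^sub>v c)"] B c by simp
qed

lemma scalar_prod_sym_mat:
  fixes G :: "real mat"
  assumes "G \<in> carrier_mat k k" "transpose_mat G = G" "x \<in> carrier_vec k" "y \<in> carrier_vec k"
  shows "x \<bullet> (G *\<^sub>v y) = (G *\<^sub>v x) \<bullet> y"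
  using transpose_vec_mult_scalar[of G k k y x] assms by simp

lemma mult_mat_assoc:
  assumes "dim_col (A :: 'a :: semiring_0 mat) = dim_row B" "dim_col B = dim_row C"
  shows "(A * B) * C = A * (B * C)"
proof -
  have "A \<in> carrier_mat (dim_row A) (dim_col A)" "B \<in> carrier_mat (dim_col A) (dim_col B)"
    "C \<in> carrier_mat (dim_col B) (dim_col C)" using assms by auto
  then show ?thesis by (rule assoc_mult_mat)
qed

lemma transpose_gram_mat:
  fixes B :: "'a :: comm_semiring_0 mat"
  shows "B \<in> carrier_mat m r \<Longrightarrow> transpose_mat (transpose_mat B * B) = transpose_mat B * B"
  using transpose_mult[of "transpose_mat B" r m B r] by simp

lemma nonzero_mat_dim_col_pos:
  assumes "A \<in> carrier_mat m n" "A \<noteq> 0\<^sub>m m n"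
  shows "0 < n"
proof (rule ccontr)
  assume "\<not> 0 < n"
  then have "A = 0\<^sub>m m n" using assms by (intro eq_matI) auto
  then show False using assms by simp
qed

subsection \<open>Orthonormal lists\<close>

definition orth_proj :: "nat \<Rightarrow> real vec list \<Rightarrow> real vec \<Rightarrow> real vec" where
  "orth_proj N ws u = vec N (\<lambda>i. \<Sum>j<length ws. (ws ! j \<bullet> u) * (ws ! j $ i))"

definition orthonormal :: "real vec list \<Rightarrow> bool" where
  "orthonormal ws \<longleftrightarrow>
     (\<forall>i<length ws. \<forall>j<length ws. ws ! i \<bullet> ws ! j = (if i = j then 1 else 0))"

lemma orth_proj_carrier [simp]: "orth_proj N ws u \<in> carrier_vec N"
  unfolding orth_proj_def by simp

lemma orth_proj_dim [simp]: "dim_vec (orth_proj N ws u) = N"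
  unfolding orth_proj_def by simp

lemma orth_proj_Nil [simp]: "orth_proj N [] u = 0\<^sub>v N"
  unfolding orth_proj_def by auto

lemma orth_proj_Cons:
  "w \<in> carrier_vec N \<Longrightarrow> orth_proj N (w # ws) u = (w \<bullet> u) \<cdot>\<^sub>v w + orth_proj N ws u"
  unfolding orth_proj_def
  by (intro eq_vecI) (auto simp: lessThan_Suc_eq_insert_0 sum.reindex)

lemma scalar_prod_orth_proj:
  assumes z: "z \<in> carrier_vec N" and ws: "set ws \<subseteq> carrier_vec N"
  shows "z \<bullet> orth_proj N ws u = (\<Sum>j<length ws. (ws ! j \<bullet> u) * (z \<bullet> ws ! j))"
proof -
  have "z \<bullet> orth_proj N ws u = (\<Sum>i<N. z $ i * (\<Sum>j<length ws. (ws ! j \<bullet> u) * (ws ! j $ i)))"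
    unfolding orth_proj_def scalar_prod_def by (simp add: lessThan_atLeast0)
  also have "\<dots> = (\<Sum>i<N. \<Sum>j<length ws. (ws ! j \<bullet> u) * (z $ i * ws ! j $ i))"
    by (simp add: sum_distrib_left algebra_simps)
  also have "\<dots> = (\<Sum>j<length ws. \<Sum>i<N. (ws ! j \<bullet> u) * (z $ i * ws ! j $ i))"
    by (rule sum.swap)
  also have "\<dots> = (\<Sum>j<length ws. (ws ! j \<bullet> u) * (z \<bullet> ws ! j))"
  proof (rule sum.cong[OF refl])
    fix j assume "j \<in> {..<length ws}"
    then have "ws ! j \<in> carrier_vec N" using ws by auto
    then show "(\<Sum>i<N. (ws ! j \<bullet> u) * (z $ i * ws ! j $ i)) = (ws ! j \<bullet> u) * (z \<bullet> ws ! j)"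
      unfolding scalar_prod_def by (simp add: sum_distrib_left lessThan_atLeast0)
  qed
  finally show ?thesis .
qed

lemma orthonormal_scalar_prod_orth_proj:
  assumes ws: "set ws \<subseteq> carrier_vec N" "orthonormal ws" and j: "j < length ws"
  shows "ws ! j \<bullet> orth_proj N ws u = ws ! j \<bullet> u"
proof -
  have "ws ! j \<bullet> orth_proj N ws u = (\<Sum>i<length ws. (ws ! i \<bullet> u) * (ws ! j \<bullet> ws ! i))"
    using ws j by (intro scalar_prod_orth_proj) auto
  also have "\<dots> = (\<Sum>i<length ws. if i = j then ws ! j \<bullet> u else 0)"
    using ws(2) j unfolding orthonormal_def by (intro sum.cong) auto
  finally show ?thesis using j by simp
qed

lemma scalar_prod_orth_proj_eq_0:
  assumes "set ws \<subseteq> carrier_vec N" "z \<in> carrier_vec N" "\<forall>j<length ws. z \<bullet> ws ! j = 0"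
  shows "z \<bullet> orth_proj N ws u = 0"
  using assms by (simp add: scalar_prod_orth_proj)

lemma orthonormal_Cons:
  assumes on: "orthonormal ws" and ws: "set ws \<subseteq> carrier_vec N" and w: "w \<in> carrier_vec N"
    and "w \<bullet> w = 1" "\<forall>j<length ws. w \<bullet> ws ! j = 0"
  shows "orthonormal (w # ws)"
  unfolding orthonormal_def
proof (intro allI impI)
  fix i j assume i: "i < length (w # ws)" and j: "j < length (w # ws)"
  show "(w # ws) ! i \<bullet> (w # ws) ! j = (if i = j then 1 else 0)"
  proof (cases i)
    case 0
    then show ?thesis using assms j by (cases j) auto
  next
    case (Suc i')
    show ?thesis
    proof (cases j)
      case 0
      have "ws ! i' \<bullet> w = w \<bullet> ws ! i'"
        using ws w Suc i by (metis comm_scalar_prod length_Cons nth_mem not_less_eq subsetD)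
      then show ?thesis using assms Suc 0 i by auto
    next
      case (Suc j')
      then show ?thesis using on \<open>i = Suc i'\<close> i j unfolding orthonormal_def by auto
    qed
  qed
qed

lemma mat_of_cols_mult_vec:
  assumes "set ws \<subseteq> carrier_vec N" "y \<in> carrier_vec (length ws)"
  shows "mat_of_cols N ws *\<^sub>v y = vec N (\<lambda>i. \<Sum>j<length ws. ws ! j $ i * y $ j)"
  using assms
  by (intro eq_vecI) (auto simp: scalar_prod_def row_def mat_of_cols_index lessThan_atLeast0)

lemma transpose_mat_of_cols_mult_vec:
  assumes "set ws \<subseteq> carrier_vec N" "u \<in> carrier_vec N"
  shows "transpose_mat (mat_of_cols N ws) *\<^sub>v u = vec (length ws) (\<lambda>j. ws ! j \<bullet> u)"
  using assms by (intro eq_vecI) (auto simp: col_mat_of_cols nth_mem subsetD)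

lemma mat_of_cols_orth_proj:
  assumes ws: "set ws \<subseteq> carrier_vec N" and u: "u \<in> carrier_vec N"
  shows "mat_of_cols N ws *\<^sub>v (transpose_mat (mat_of_cols N ws) *\<^sub>v u) = orth_proj N ws u"
  unfolding transpose_mat_of_cols_mult_vec[OF ws u]
  by (subst mat_of_cols_mult_vec[OF ws]) (auto simp: orth_proj_def mult.commute)

lemma transpose_mat_of_cols_orthonormal:
  assumes "set ws \<subseteq> carrier_vec N" "orthonormal ws"
  shows "transpose_mat (mat_of_cols N ws) * mat_of_cols N ws = 1\<^sub>m (length ws)"
  using assms unfolding orthonormal_def
  by (intro eq_matI) (auto simp: col_mat_of_cols nth_mem subsetD)

lemma orthonormal_length_le:
  assumes ws: "set ws \<subseteq> carrier_vec N" and on: "orthonormal ws"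
  shows "length ws \<le> N"
proof (rule ccontr)
  assume "\<not> length ws \<le> N"
  then have lt: "N < length ws" by simp
  define r where "r = length ws"
  define Q where "Q = mat_of_cols N ws"
  have Q: "Q \<in> carrier_mat N r" unfolding Q_def r_def by simp
  have QTQ: "transpose_mat Q * Q = 1\<^sub>m r"
    unfolding Q_def r_def by (rule transpose_mat_of_cols_orthonormal[OF ws on])
  \<comment> \<open>pad \<open>Q\<close> with zero rows to a square matrix; its row \<open>N\<close> vanishes, so it is singular\<close>
  define B :: "real mat" where "B = mat r r (\<lambda>(i, j). if i < N then ws ! j $ i else 0)"
  have B: "B \<in> carrier_mat r r" unfolding B_def by simp
  have "det B = (\<Sum>p \<in> {p. p permutes {0..<r}}. signof p * (\<Prod>i = 0..<r. B $$ (i, p i)))"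
    by (rule det_def'[OF B])
  also have "\<dots> = 0"
  proof (intro sum.neutral ballI)
    fix p assume "p \<in> {p. p permutes {0..<r}}"
    then have "p N < r" using lt unfolding r_def by (simp add: permutes_in_image)
    then have "B $$ (N, p N) = 0" unfolding B_def using lt r_def by simp
    then show "signof p * (\<Prod>i = 0..<r. B $$ (i, p i)) = 0"
      using lt unfolding r_def by (auto intro!: prod_zero bexI[of _ N])
  qed
  finally obtain y where y: "y \<in> carrier_vec r" "y \<noteq> 0\<^sub>v r" "B *\<^sub>v y = 0\<^sub>v r"
    using det_0_iff_vec_prod_zero[OF B] by auto
  have Qy: "Q *\<^sub>v y = 0\<^sub>v N"
  proof (rule eq_vecI)
    fix i assume "i < dim_vec (0\<^sub>v N :: real vec)"
    then have i: "i < N" by simp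
    have "(Q *\<^sub>v y) $ i = (B *\<^sub>v y) $ i"
      using i lt B Q y(1) unfolding B_def Q_def r_def
      by (auto simp: scalar_prod_def mat_of_cols_index intro!: sum.cong)
    then show "(Q *\<^sub>v y) $ i = 0\<^sub>v N $ i" using i lt y(3) r_def by simp
  qed (use Q in auto)
  have "y = (transpose_mat Q * Q) *\<^sub>v y" unfolding QTQ using y by simp
  also have "\<dots> = transpose_mat Q *\<^sub>v (Q *\<^sub>v y)" using Q y by (simp add: assoc_mult_mat_vec)
  also have "\<dots> = 0\<^sub>v r" unfolding Qy using Q by (intro eq_vecI) auto
  finally show False using y by simp
qed

definition vec_subspace :: "nat \<Rightarrow> real vec set \<Rightarrow> bool" where
  "vec_subspace N V \<longleftrightarrow> V \<subseteq> carrier_vec N \<and> 0\<^sub>v N \<in> V \<and>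
     (\<forall>x\<in>V. \<forall>y\<in>V. x + y \<in> V) \<and> (\<forall>c. \<forall>x\<in>V. c \<cdot>\<^sub>v x \<in> V)"

lemma vec_subspace_diff:
  assumes V: "vec_subspace N V" and "x \<in> V" "y \<in> V"
  shows "x - y \<in> V"
proof -
  have "x \<in> carrier_vec N" "y \<in> carrier_vec N" using V assms unfolding vec_subspace_def by auto
  then have "x - y = x + (-1) \<cdot>\<^sub>v y" by (intro eq_vecI) auto
  then show ?thesis using V assms unfolding vec_subspace_def by simp
qed

lemma orth_proj_mem_subspace:
  assumes V: "vec_subspace N V" and ws: "set ws \<subseteq> V"
  shows "orth_proj N ws u \<in> V"
  using ws
proof (induction ws)
  case Nil
  then show ?case using V unfolding vec_subspace_def by simp
next
  case (Cons w ws)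
  then have "w \<in> carrier_vec N" using V unfolding vec_subspace_def by auto
  then show ?case using Cons V unfolding vec_subspace_def by (simp add: orth_proj_Cons)
qed

lemma gram_schmidt_step:
  assumes ws: "set ws \<subseteq> carrier_vec N" "orthonormal ws" and u: "u \<in> carrier_vec N"
    and r: "u - orth_proj N ws u \<noteq> 0\<^sub>v N"
  defines "w \<equiv> (1 / vnorm (u - orth_proj N ws u)) \<cdot>\<^sub>v (u - orth_proj N ws u)"
  shows "orthonormal (w # ws)" "orth_proj N (w # ws) u = u"
    and "\<And>x. x \<in> carrier_vec N \<Longrightarrow> orth_proj N ws x = x \<Longrightarrow> orth_proj N (w # ws) x = x"
proof -
  define r where "r = u - orth_proj N ws u"
  have rc: "r \<in> carrier_vec N" unfolding r_def using u by simp
  have rr: "r \<bullet> r > 0" using r rc unfolding r_def by (simp add: scalar_prod_self_pos_iff)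
  define \<nu> where "\<nu> = vnorm r"
  have \<nu>: "\<nu> > 0" "\<nu> * \<nu> = r \<bullet> r" unfolding \<nu>_def vnorm_def using rr by auto
  have w_def': "w = (1 / \<nu>) \<cdot>\<^sub>v r" unfolding w_def r_def \<nu>_def ..
  have w: "w \<in> carrier_vec N" unfolding w_def' using rc by simp
  have r_perp: "r \<bullet> ws ! j = 0" if j: "j < length ws" for j
  proof -
    have wj: "ws ! j \<in> carrier_vec N" using ws j by auto
    have "ws ! j \<bullet> r = ws ! j \<bullet> u - ws ! j \<bullet> orth_proj N ws u"
      unfolding r_def using wj u by (simp add: scalar_prod_minus_distrib)
    also have "\<dots> = 0" using orthonormal_scalar_prod_orth_proj[OF ws j] by simp
    finally show ?thesis using comm_scalar_prod[OF rc wj] by simp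
  qed
  have w_perp: "\<forall>j<length ws. w \<bullet> ws ! j = 0"
    using r_perp ws rc unfolding w_def' by (auto simp: nth_mem subsetD)
  have "w \<bullet> w = 1" unfolding w_def' using rc \<nu> rr by (simp add: field_simps)
  then show "orthonormal (w # ws)" by (rule orthonormal_Cons[OF ws(2,1) w _ w_perp])
  have u_split: "u = r + orth_proj N ws u" unfolding r_def using u by (intro eq_vecI) auto
  have "r \<bullet> orth_proj N ws u = 0" by (rule scalar_prod_orth_proj_eq_0[OF ws(1) rc]) (use r_perp in auto)
  then have "r \<bullet> u = r \<bullet> r"
    using u_split rc u by (metis orth_proj_carrier scalar_prod_add_distrib add_0_right)
  then have "w \<bullet> u = \<nu>" unfolding w_def' using rc u \<nu> by (simp add: field_simps)
  then have "(w \<bullet> u) \<cdot>\<^sub>v w = r" unfolding w_def' using \<nu> rc by (intro eq_vecI) auto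
  then show "orth_proj N (w # ws) u = u" unfolding orth_proj_Cons[OF w] using u_split by simp
  fix x assume x: "x \<in> carrier_vec N" and px: "orth_proj N ws x = x"
  have "w \<bullet> x = w \<bullet> orth_proj N ws x" using px by simp
  also have "\<dots> = 0" by (rule scalar_prod_orth_proj_eq_0[OF ws(1) w w_perp])
  finally show "orth_proj N (w # ws) x = x" unfolding orth_proj_Cons[OF w] using px w x
    by (intro eq_vecI) auto
qed

lemma orthonormal_basis_exists:
  assumes V: "vec_subspace N V" and us: "set us \<subseteq> V"
  shows "\<exists>ws. set ws \<subseteq> V \<and> length ws \<le> length us \<and> orthonormal ws \<and>
     (\<forall>u\<in>set us. orth_proj N ws u = u)"
  using us
proof (induction us)
  case Nil
  show ?case by (intro exI[of _ "[]"]) (auto simp: orthonormal_def)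
next
  case (Cons u us)
  then obtain ws where ws: "set ws \<subseteq> V" "length ws \<le> length us" "orthonormal ws"
    and fixed: "\<forall>x\<in>set us. orth_proj N ws x = x" by auto
  have VN: "V \<subseteq> carrier_vec N" using V unfolding vec_subspace_def by simp
  have u: "u \<in> V" using Cons by simp
  then have uN: "u \<in> carrier_vec N" using VN by auto
  show ?case
  proof (cases "u - orth_proj N ws u = 0\<^sub>v N")
    case True
    have "u = (u - orth_proj N ws u) + orth_proj N ws u" using uN by (intro eq_vecI) auto
    then have "orth_proj N ws u = u" using True by simp
    then show ?thesis using ws fixed by (intro exI[of _ ws]) auto
  next
    case False
    define w where "w = (1 / vnorm (u - orth_proj N ws u)) \<cdot>\<^sub>v (u - orth_proj N ws u)"
    have wsN: "set ws \<subseteq> carrier_vec N" using ws VN by auto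
    note step = gram_schmidt_step[OF wsN ws(3) uN False, folded w_def]
    have "u - orth_proj N ws u \<in> V"
      by (rule vec_subspace_diff[OF V u orth_proj_mem_subspace[OF V ws(1)]])
    then have "w \<in> V" using V unfolding w_def vec_subspace_def by blast
    moreover have "\<forall>x\<in>set (u # us). orth_proj N (w # ws) x = x"
      using step(2,3) fixed Cons.prems VN u by auto
    ultimately show ?thesis using ws step(1) by (intro exI[of _ "w # ws"]) auto
  qed
qed

subsection \<open>Symmetric matrices\<close>

lemma sym_mat_complex_eigenvalue_real:
  fixes G :: "real mat"
  assumes G: "G \<in> carrier_mat k k" and sym: "transpose_mat G = G"
    and ez: "eigenvalue (map_mat complex_of_real G) z"
  shows "Im z = 0"
proof -
  define Gc where "Gc = map_mat complex_of_real G"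
  have Gc: "Gc \<in> carrier_mat k k" unfolding Gc_def using G by simp
  obtain w where w: "w \<in> carrier_vec k" "w \<noteq> 0\<^sub>v k" "Gc *\<^sub>v w = z \<cdot>\<^sub>v w"
    using ez Gc unfolding Gc_def[symmetric] eigenvalue_def eigenvector_def by auto
  have Gij: "G $$ (i, j) = G $$ (j, i)" if "i < k" "j < k" for i j
    using arg_cong[OF sym, of "\<lambda>M. M $$ (j, i)"] that G by auto
  \<comment> \<open>the Hermitian form \<open>w\<^sup>* G w\<close> is real and equals \<open>z \<parallel>w\<parallel>\<^sup>2\<close>\<close>
  define S where "S = (\<Sum>i<k. \<Sum>j<k. cnj (w $ i) * of_real (G $$ (i, j)) * w $ j)"
  define N where "N = (\<Sum>i<k. (cmod (w $ i))\<^sup>2)"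
  have "S = (\<Sum>i<k. cnj (w $ i) * (Gc *\<^sub>v w) $ i)"
  proof -
    have row: "(Gc *\<^sub>v w) $ i = (\<Sum>j<k. of_real (G $$ (i, j)) * w $ j)" if "i < k" for i
      using that Gc w(1) G by (auto simp: Gc_def scalar_prod_def lessThan_atLeast0)
    show ?thesis unfolding S_def
      by (intro sum.cong refl) (auto simp: row sum_distrib_left mult.assoc)
  qed
  also have "\<dots> = (\<Sum>i<k. z * (w $ i * cnj (w $ i)))"
    unfolding w(3) using w by (intro sum.cong refl) (auto simp: algebra_simps)
  also have "\<dots> = z * of_real N" unfolding N_def of_real_sum sum_distrib_left
    by (intro sum.cong refl) (metis complex_norm_square)
  finally have S1: "S = z * of_real N" .
  have "cnj S = (\<Sum>i<k. \<Sum>j<k. w $ i * of_real (G $$ (i, j)) * cnj (w $ j))"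
    unfolding S_def by (simp add: cnj_sum)
  also have "\<dots> = (\<Sum>j<k. \<Sum>i<k. w $ i * of_real (G $$ (i, j)) * cnj (w $ j))"
    by (rule sum.swap)
  also have "\<dots> = S" unfolding S_def
    by (intro sum.cong refl) (auto simp: Gij mult.commute mult.left_commute)
  finally have "Im (cnj S) = Im S" by simp
  then have "Im S = 0" by simp
  moreover obtain i where "i < k" "w $ i \<noteq> 0" using w by (metis eq_vecI index_zero_vec(1,2) carrier_vecD)
  then have "N > 0" unfolding N_def by (intro sum_pos2[of _ i]) auto
  ultimately show ?thesis using S1 by simp
qed

lemma real_sym_mat_has_eigenvalue:
  fixes G :: "real mat"
  assumes G: "G \<in> carrier_mat k k" and k: "k > 0" and sym: "transpose_mat G = G"
  shows "\<exists>\<mu>. eigenvalue G \<mu>"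
proof -
  define Gc where "Gc = map_mat complex_of_real G"
  have Gc: "Gc \<in> carrier_mat k k" unfolding Gc_def using G by simp
  obtain z where ez: "eigenvalue Gc z"
    using spectrum_non_empty[OF Gc k] unfolding spectrum_def by auto
  then have zr: "z = complex_of_real (Re z)"
    using sym_mat_complex_eigenvalue_real[OF G sym] unfolding Gc_def by (simp add: complex_eq_iff)
  have "poly (char_poly Gc) z = 0" using ez eigenvalue_root_char_poly[OF Gc] by simp
  moreover have "char_poly Gc = map_poly complex_of_real (char_poly G)"
    unfolding Gc_def by (rule of_real_hom.char_poly_hom[OF G])
  ultimately have "complex_of_real (poly (char_poly G) (Re z)) = 0"
    by (metis zr of_real_hom.poly_map_poly)
  then have "poly (char_poly G) (Re z) = 0" by simp
  then show ?thesis using eigenvalue_root_char_poly[OF G] by auto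
qed

lemma orth_proj_complement_decomp:
  fixes v :: "real vec"
  assumes v: "v \<in> carrier_vec k"
    and ws: "set ws \<subseteq> carrier_vec k" and perp: "\<forall>w\<in>set ws. v \<bullet> w = 0"
    and pr: "\<forall>i<k. orth_proj k ws (unit_vec k i - (v $ i) \<cdot>\<^sub>v v) = unit_vec k i - (v $ i) \<cdot>\<^sub>v v"
    and z: "z \<in> carrier_vec k"
  shows "z = (v \<bullet> z) \<cdot>\<^sub>v v + orth_proj k ws z"
proof -
  define K where "K i l = (\<Sum>j<length ws. ws ! j $ i * ws ! j $ l)" for i l
  have wc: "\<And>j. j < length ws \<Longrightarrow> ws ! j \<in> carrier_vec k" using ws by (auto simp: nth_mem subsetD)
  have wv: "\<And>j. j < length ws \<Longrightarrow> ws ! j \<bullet> v = 0"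
    using perp wc v by (metis comm_scalar_prod nth_mem)
  have K: "K i l = (if i = l then 1 else 0) - v$i * v$l" if i: "i < k" and l: "l < k" for i l
  proof -
    have "orth_proj k ws (unit_vec k i - (v $ i) \<cdot>\<^sub>v v) $ l = (unit_vec k i - (v $ i) \<cdot>\<^sub>v v) $ l"
      using pr i by simp
    moreover have "ws ! j \<bullet> (unit_vec k i - (v $ i) \<cdot>\<^sub>v v) = ws ! j $ i" if "j < length ws" for j
      using wc[OF that] wv[OF that] i v
      by (simp add: scalar_prod_minus_distrib)
    ultimately show ?thesis using l i v unfolding orth_proj_def K_def by auto
  qed
  show ?thesis
  proof (rule eq_vecI)
    fix l assume "l < dim_vec ((v \<bullet> z) \<cdot>\<^sub>v v + orth_proj k ws z)"
    then have l: "l < k" using v by simp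
    have "orth_proj k ws z $ l = (\<Sum>j<length ws. (\<Sum>i<k. ws ! j $ i * z $ i) * ws ! j $ l)"
      unfolding orth_proj_def using l wc z by (auto simp: scalar_prod_def lessThan_atLeast0 intro!: sum.cong)
    also have "\<dots> = (\<Sum>i<k. z $ i * K i l)"
      unfolding K_def by (simp add: sum_distrib_left sum_distrib_right mult_ac sum.swap[of _ "{..<k}"])
    also have "\<dots> = (\<Sum>i<k. (if i = l then z $ i else 0) - v $ l * (v $ i * z $ i))"
      by (intro sum.cong refl, auto simp: K l algebra_simps)
    also have "\<dots> = z $ l - v $ l * (v \<bullet> z)"
      using l z by (simp add: sum_subtractf sum_distrib_left[symmetric] scalar_prod_def lessThan_atLeast0)
    finally show "z $ l = ((v \<bullet> z) \<cdot>\<^sub>v v + orth_proj k ws z) $ l" using l v by simp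
  qed (use v z in simp)
qed

lemma unit_vec_orthonormal_complement:
  assumes v: "v \<in> carrier_vec k" "v \<bullet> v = 1"
  shows "\<exists>ws. set ws \<subseteq> carrier_vec k \<and> orthonormal ws \<and> (\<forall>w\<in>set ws. v \<bullet> w = 0) \<and>
    (\<forall>z\<in>carrier_vec k. z = (v \<bullet> z) \<cdot>\<^sub>v v + orth_proj k ws z)"
proof -
  define V where "V = {w \<in> carrier_vec k. v \<bullet> w = 0}"
  have V: "vec_subspace k V"
    unfolding vec_subspace_def V_def using v by (auto simp: scalar_prod_add_distrib)
  define p where "p i = unit_vec k i - (v $ i) \<cdot>\<^sub>v v" for i
  have "set (map p [0..<k]) \<subseteq> V"
    unfolding V_def p_def using v by (auto simp: scalar_prod_minus_distrib)
  then obtain ws where ws: "set ws \<subseteq> V" "orthonormal ws"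
    and fixed: "\<forall>u\<in>set (map p [0..<k]). orth_proj k ws u = u"
    using orthonormal_basis_exists[OF V] by blast
  have wsk: "set ws \<subseteq> carrier_vec k" and perp: "\<forall>w\<in>set ws. v \<bullet> w = 0"
    using ws(1) unfolding V_def by auto
  have "\<forall>i<k. orth_proj k ws (p i) = p i" using fixed by auto
  then have "\<forall>z\<in>carrier_vec k. z = (v \<bullet> z) \<cdot>\<^sub>v v + orth_proj k ws z"
    using orth_proj_complement_decomp[OF v(1) wsk perp] unfolding p_def by blast
  then show ?thesis using wsk ws(2) perp by blast
qed

locale sym_deflation =
  fixes G :: "real mat" and k r :: nat and v :: "real vec" and \<mu> :: real and W :: "real mat"
  assumes G: "G \<in> carrier_mat k k" "transpose_mat G = G"
    and v: "v \<in> carrier_vec k" "v \<bullet> v = 1" "G *\<^sub>v v = \<mu> \<cdot>\<^sub>v v"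
    and W: "W \<in> carrier_mat k r" "transpose_mat W * W = 1\<^sub>m r" "transpose_mat W *\<^sub>v v = 0\<^sub>v r"
    and decomp: "\<And>z. z \<in> carrier_vec k \<Longrightarrow> z = (v \<bullet> z) \<cdot>\<^sub>v v + W *\<^sub>v (transpose_mat W *\<^sub>v z)"
begin

definition compressed :: "real mat" where
  "compressed = transpose_mat W * G * W"

lemma compressed_carrier: "compressed \<in> carrier_mat r r"
  unfolding compressed_def using G W by simp

lemma compressed_sym: "transpose_mat compressed = compressed"
proof -
  have WtG: "transpose_mat W * G \<in> carrier_mat r k" using W G by simp
  have "transpose_mat compressed = transpose_mat W * transpose_mat (transpose_mat W * G)"
    unfolding compressed_def by (rule transpose_mult[OF WtG W(1)])
  also have "transpose_mat (transpose_mat W * G) = transpose_mat G * W"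
    using transpose_mult[of "transpose_mat W" r k G k] W G by simp
  also have "transpose_mat W * (transpose_mat G * W) = compressed"
    unfolding G(2) compressed_def using W G by (simp add: assoc_mult_mat[of _ r k _ k _ r])
  finally show ?thesis .
qed

lemma compressed_mult_vec:
  assumes y: "y \<in> carrier_vec r"
  shows "compressed *\<^sub>v y = transpose_mat W *\<^sub>v (G *\<^sub>v (W *\<^sub>v y))"
proof -
  have WtG: "transpose_mat W * G \<in> carrier_mat r k" using W G by simp
  have "compressed *\<^sub>v y = (transpose_mat W * G) *\<^sub>v (W *\<^sub>v y)"
    unfolding compressed_def by (rule assoc_mult_mat_vec[OF WtG W(1) y])
  also have "\<dots> = transpose_mat W *\<^sub>v (G *\<^sub>v (W *\<^sub>v y))"
    by (rule assoc_mult_mat_vec) (use W G y in auto)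
  finally show ?thesis .
qed

lemma transpose_W_mult_W: "y \<in> carrier_vec r \<Longrightarrow> transpose_mat W *\<^sub>v (W *\<^sub>v y) = y"
  using W assoc_mult_mat_vec[of "transpose_mat W" r k W r y] by simp

lemma v_perp_W: "y \<in> carrier_vec r \<Longrightarrow> v \<bullet> (W *\<^sub>v y) = 0"
  using transpose_vec_mult_scalar[OF W(1) _ v(1), of y] W(3) by simp

lemma v_perp_GW: "y \<in> carrier_vec r \<Longrightarrow> v \<bullet> (G *\<^sub>v (W *\<^sub>v y)) = 0"
  using scalar_prod_sym_mat[OF G v(1), of "W *\<^sub>v y"] v_perp_W[of y] v W by simp

lemma eigenvalue_compressed:
  assumes "eigenvalue compressed \<theta>"
  shows "eigenvalue G \<theta>"
proof -
  obtain y where y: "y \<in> carrier_vec r" "y \<noteq> 0\<^sub>v r" "compressed *\<^sub>v y = \<theta> \<cdot>\<^sub>v y"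
    using assms compressed_carrier unfolding eigenvalue_def eigenvector_def by auto
  define z where "z = W *\<^sub>v y"
  have z: "z \<in> carrier_vec k" unfolding z_def using W y by simp
  have Gz: "G *\<^sub>v z \<in> carrier_vec k" using G z by simp
  have "G *\<^sub>v z = (v \<bullet> (G *\<^sub>v z)) \<cdot>\<^sub>v v + W *\<^sub>v (transpose_mat W *\<^sub>v (G *\<^sub>v z))"
    by (rule decomp[OF Gz])
  also have "v \<bullet> (G *\<^sub>v z) = 0" unfolding z_def by (rule v_perp_GW[OF y(1)])
  also have "transpose_mat W *\<^sub>v (G *\<^sub>v z) = \<theta> \<cdot>\<^sub>v y"
    using compressed_mult_vec[OF y(1)] y(3) unfolding z_def by simp
  finally have "G *\<^sub>v z = \<theta> \<cdot>\<^sub>v z"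
    unfolding z_def using v W y by (auto simp: mult_mat_vec)
  moreover have "z \<noteq> 0\<^sub>v k"
  proof
    assume "z = 0\<^sub>v k"
    then have "y = transpose_mat W *\<^sub>v 0\<^sub>v k" using transpose_W_mult_W[OF y(1)] unfolding z_def by simp
    also have "\<dots> = 0\<^sub>v r" using W by (intro eq_vecI) auto
    finally show False using y(2) by simp
  qed
  ultimately show ?thesis unfolding eigenvalue_def eigenvector_def using G z by auto
qed

lemma quadratic_form_split:
  assumes z: "z \<in> carrier_vec k"
  defines "y \<equiv> transpose_mat W *\<^sub>v z"
  shows "z \<bullet> (G *\<^sub>v z) = \<mu> * (v \<bullet> z)\<^sup>2 + y \<bullet> (compressed *\<^sub>v y)"
    and "z \<bullet> z = (v \<bullet> z)\<^sup>2 + y \<bullet> y"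
proof -
  define c where "c = v \<bullet> z"
  have y: "y \<in> carrier_vec r" unfolding y_def using W z by simp
  define u where "u = W *\<^sub>v y"
  have u: "u \<in> carrier_vec k" unfolding u_def using W y by simp
  have zd: "z = c \<cdot>\<^sub>v v + u" unfolding c_def u_def y_def by (rule decomp[OF z])
  have vu: "v \<bullet> u = 0" and uv: "u \<bullet> v = 0"
    unfolding u_def using v_perp_W[OF y] comm_scalar_prod[OF v(1), of "W *\<^sub>v y"] W y by auto
  have uu: "u \<bullet> u = y \<bullet> y"
    using transpose_vec_mult_scalar[OF W(1) y, of "W *\<^sub>v y"] transpose_W_mult_W[OF y] W y
    unfolding u_def by simp
  have Gu: "G *\<^sub>v u \<in> carrier_vec k" using G u by simp
  have vGu: "v \<bullet> (G *\<^sub>v u) = 0" unfolding u_def by (rule v_perp_GW[OF y])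
  have WtGu: "transpose_mat W *\<^sub>v (G *\<^sub>v u) \<in> carrier_vec r" using W Gu by simp
  have uGu: "u \<bullet> (G *\<^sub>v u) = y \<bullet> (compressed *\<^sub>v y)"
    using transpose_vec_mult_scalar[OF W(1) y Gu] comm_scalar_prod[OF Gu u] comm_scalar_prod[OF y WtGu]
    unfolding compressed_mult_vec[OF y] u_def by simp
  have Gz: "G *\<^sub>v z = (c * \<mu>) \<cdot>\<^sub>v v + G *\<^sub>v u"
    unfolding zd using G v u by (simp add: mult_add_distrib_mat_vec mult_mat_vec smult_smult_assoc)
  have "z \<bullet> (G *\<^sub>v z) = (c \<cdot>\<^sub>v v + u) \<bullet> ((c * \<mu>) \<cdot>\<^sub>v v + G *\<^sub>v u)"
    unfolding Gz using zd by simp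
  also have "\<dots> = c * (c * \<mu>) * (v \<bullet> v) + c * (v \<bullet> (G *\<^sub>v u)) + (c * \<mu>) * (u \<bullet> v) + u \<bullet> (G *\<^sub>v u)"
    using v u Gu
    by (simp add: add_scalar_prod_distrib[of _ k] scalar_prod_add_distrib[of _ k] algebra_simps)
  finally show "z \<bullet> (G *\<^sub>v z) = \<mu> * (v \<bullet> z)\<^sup>2 + y \<bullet> (compressed *\<^sub>v y)"
    using v vGu uv uGu unfolding c_def by (simp add: power2_eq_square)
  have "z \<bullet> z = c * c * (v \<bullet> v) + c * (v \<bullet> u) + c * (u \<bullet> v) + u \<bullet> u"
    unfolding zd using v u
    by (simp add: add_scalar_prod_distrib[of _ k] scalar_prod_add_distrib[of _ k] algebra_simps)
  then show "z \<bullet> z = (v \<bullet> z)\<^sup>2 + y \<bullet> y" using v vu uv uu unfolding c_def by (simp add: power2_eq_square)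
qed

end

lemma sym_deflation_exists:
  assumes G: "G \<in> carrier_mat k k" "transpose_mat G = G" and "eigenvalue G \<mu>"
  shows "\<exists>v W r. r < k \<and> sym_deflation G k r v \<mu> W"
proof -
  obtain v0 where v0: "v0 \<in> carrier_vec k" "v0 \<noteq> 0\<^sub>v k" "G *\<^sub>v v0 = \<mu> \<cdot>\<^sub>v v0"
    using assms unfolding eigenvalue_def eigenvector_def by auto
  have v0pos: "v0 \<bullet> v0 > 0" using v0 by (simp add: scalar_prod_self_pos_iff)
  define v where "v = (1 / sqrt (v0 \<bullet> v0)) \<cdot>\<^sub>v v0"
  have v: "v \<in> carrier_vec k" "v \<bullet> v = 1" "G *\<^sub>v v = \<mu> \<cdot>\<^sub>v v"
    unfolding v_def using v0 v0pos G by (auto simp: field_simps mult_mat_vec smult_smult_assoc)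
  obtain ws where ws: "set ws \<subseteq> carrier_vec k" "orthonormal ws" and perp: "\<forall>w\<in>set ws. v \<bullet> w = 0"
    and decomp: "\<forall>z\<in>carrier_vec k. z = (v \<bullet> z) \<cdot>\<^sub>v v + orth_proj k ws z"
    using unit_vec_orthonormal_complement[OF v(1,2)] by blast
  define r where "r = length ws"
  define W where "W = mat_of_cols k ws"
  have "orthonormal (v # ws)"
    by (rule orthonormal_Cons[OF ws(2,1) v(1,2)]) (use perp in auto)
  then have "r < k" using orthonormal_length_le[of "v # ws" k] v ws unfolding r_def by auto
  moreover have "\<forall>j<length ws. ws ! j \<bullet> v = 0"
    using perp ws v by (metis comm_scalar_prod nth_mem subsetD)
  then have "transpose_mat W *\<^sub>v v = 0\<^sub>v r"
    unfolding W_def r_def transpose_mat_of_cols_mult_vec[OF ws(1) v(1)]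
    by (intro eq_vecI) auto
  then have "sym_deflation G k r v \<mu> W"
    using G v ws decomp transpose_mat_of_cols_orthonormal[OF ws]
    by unfold_locales (auto simp: W_def r_def mat_of_cols_orth_proj)
  ultimately show ?thesis by blast
qed

lemma sym_mat_eigenvalue_le_rayleigh:
  fixes G :: "real mat"
  assumes "G \<in> carrier_mat k k" "k > 0" "transpose_mat G = G"
  shows "\<exists>\<mu>. eigenvalue G \<mu> \<and> (\<forall>z\<in>carrier_vec k. \<mu> * (z \<bullet> z) \<le> z \<bullet> (G *\<^sub>v z))"
  using assms
proof (induction k arbitrary: G rule: less_induct)
  case (less k)
  obtain \<mu>1 where e1: "eigenvalue G \<mu>1"
    using real_sym_mat_has_eigenvalue[OF less.prems] by auto
  then obtain v W r where rk: "r < k" and D: "sym_deflation G k r v \<mu>1 W"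
    using sym_deflation_exists[OF less.prems(1,3)] by blast
  interpret sym_deflation G k r v \<mu>1 W by (rule D)
  \<comment> \<open>recurse on the compression of \<open>G\<close> to the orthogonal complement of an eigenvector\<close>
  obtain \<mu>2 where e2: "eigenvalue G \<mu>2"
    and b2: "\<forall>y\<in>carrier_vec r. \<mu>2 * (y \<bullet> y) \<le> y \<bullet> (compressed *\<^sub>v y)"
  proof (cases "r = 0")
    case True
    show ?thesis by (rule that[OF e1]) (use True compressed_carrier in \<open>auto simp: scalar_prod_def\<close>)
  next
    case False
    then obtain \<mu>2 where "eigenvalue compressed \<mu>2"
      and "\<forall>y\<in>carrier_vec r. \<mu>2 * (y \<bullet> y) \<le> y \<bullet> (compressed *\<^sub>v y)"
      using less.IH[OF rk compressed_carrier _ compressed_sym] by auto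
    then show ?thesis using that eigenvalue_compressed by blast
  qed
  show ?case
  proof (intro exI[of _ "min \<mu>1 \<mu>2"] conjI ballI)
    show "eigenvalue G (min \<mu>1 \<mu>2)" using e1 e2 by (simp add: min_def)
    fix z :: "real vec" assume z: "z \<in> carrier_vec k"
    define y where "y = transpose_mat W *\<^sub>v z"
    have y: "y \<in> carrier_vec r" unfolding y_def using W z by simp
    have "min \<mu>1 \<mu>2 * (z \<bullet> z) = min \<mu>1 \<mu>2 * (v \<bullet> z)\<^sup>2 + min \<mu>1 \<mu>2 * (y \<bullet> y)"
      unfolding quadratic_form_split(2)[OF z] y_def by (simp add: algebra_simps)
    also have "\<dots> \<le> \<mu>1 * (v \<bullet> z)\<^sup>2 + \<mu>2 * (y \<bullet> y)"
      by (intro add_mono mult_right_mono scalar_prod_self_nonneg) auto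
    also have "\<dots> \<le> z \<bullet> (G *\<^sub>v z)"
      unfolding quadratic_form_split(1)[OF z] y_def[symmetric] using b2 y by simp
    finally show "min \<mu>1 \<mu>2 * (z \<bullet> z) \<le> z \<bullet> (G *\<^sub>v z)" .
  qed
qed

subsection \<open>Row space, pseudoinverse and singular values\<close>

lemma row_space_carrier: "A \<in> carrier_mat m n \<Longrightarrow> row_space A \<subseteq> carrier_vec n"
  unfolding row_space_def by auto

lemma row_space_subspace:
  assumes A: "A \<in> carrier_mat m n"
  shows "vec_subspace n (row_space A)"
  unfolding vec_subspace_def
proof (intro conjI ballI allI)
  show "row_space A \<subseteq> carrier_vec n" by (rule row_space_carrier[OF A])
  show "0\<^sub>v n \<in> row_space A"
    unfolding row_space_def using A by (auto intro!: exI[of _ "0\<^sub>v m"])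
  fix x y c assume "x \<in> row_space A" "y \<in> row_space A"
  then obtain s t where st: "s \<in> carrier_vec m" "t \<in> carrier_vec m"
    "x = transpose_mat A *\<^sub>v s" "y = transpose_mat A *\<^sub>v t"
    unfolding row_space_def using A by auto
  show "x + y \<in> row_space A" unfolding row_space_def using A st
    by (auto intro!: exI[of _ "s + t"] simp: mult_add_distrib_mat_vec[of _ n m])
  show "c \<cdot>\<^sub>v x \<in> row_space A" unfolding row_space_def using A st
    by (auto intro!: exI[of _ "c \<cdot>\<^sub>v s"] simp: mult_mat_vec)
qed

lemma row_mem_row_space:
  assumes A: "A \<in> carrier_mat m n" and i: "i < m"
  shows "row A i \<in> row_space A"
proof -
  have "transpose_mat A *\<^sub>v unit_vec m i = row A i" using A i by (intro eq_vecI) auto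
  then show ?thesis unfolding row_space_def using A i by (auto intro!: exI[of _ "unit_vec m i"])
qed

locale row_space_basis =
  fixes A :: "real mat" and m n r :: nat and V :: "real mat"
  assumes A: "A \<in> carrier_mat m n"
    and V: "V \<in> carrier_mat n r" "transpose_mat V * V = 1\<^sub>m r"
    and V_row_space: "\<And>c. c \<in> carrier_vec r \<Longrightarrow> V *\<^sub>v c \<in> row_space A"
    and proj_transpose: "(V * transpose_mat V) * transpose_mat A = transpose_mat A"
begin

lemma V_proj:
  assumes "e \<in> row_space A"
  shows "V *\<^sub>v (transpose_mat V *\<^sub>v e) = e"
proof -
  obtain t where t: "t \<in> carrier_vec m" "e = transpose_mat A *\<^sub>v t"
    using assms A unfolding row_space_def by auto
  have "V *\<^sub>v (transpose_mat V *\<^sub>v e) = (V * transpose_mat V) *\<^sub>v e"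
    by (rule assoc_mult_mat_vec[symmetric]) (use A V t in auto)
  also have "\<dots> = ((V * transpose_mat V) * transpose_mat A) *\<^sub>v t"
    unfolding t(2) by (rule assoc_mult_mat_vec[symmetric]) (use A V t in auto)
  finally show ?thesis unfolding proj_transpose t(2) .
qed

lemma isometry: "c \<in> carrier_vec r \<Longrightarrow> (V *\<^sub>v c) \<bullet> (V *\<^sub>v c) = c \<bullet> c"
  using scalar_prod_gram_mat[OF V(1), of c] V by simp

lemma AV_inj:
  assumes c: "c \<in> carrier_vec r" and AVc: "A *\<^sub>v (V *\<^sub>v c) = 0\<^sub>v m"
  shows "c = 0\<^sub>v r"
proof -
  obtain t where t: "t \<in> carrier_vec m" "V *\<^sub>v c = transpose_mat A *\<^sub>v t"
    using V_row_space[OF c] A unfolding row_space_def by auto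
  have Vc: "V *\<^sub>v c \<in> carrier_vec n" using V c by simp
  \<comment> \<open>\<open>V c\<close> lies in the row space and is orthogonal to it\<close>
  have "c \<bullet> c = t \<bullet> (A *\<^sub>v (V *\<^sub>v c))"
    using isometry[OF c] transpose_vec_mult_scalar[OF A Vc t(1)] t(2) by simp
  then have "c \<bullet> c = 0" unfolding AVc using t by simp
  then show ?thesis using c by (simp add: scalar_prod_self_eq_0_iff)
qed

lemma mult_proj: "A * (V * transpose_mat V) = A"
proof -
  have "transpose_mat (V * transpose_mat V) = V * transpose_mat V"
    using transpose_mult[of V n r "transpose_mat V" n] V by simp
  then have "transpose_mat ((V * transpose_mat V) * transpose_mat A) = A * (V * transpose_mat V)"
    using transpose_mult[of "V * transpose_mat V" n n "transpose_mat A" m] V A by simp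
  then show ?thesis using proj_transpose by simp
qed

lemma pos_dim: "A \<noteq> 0\<^sub>m m n \<Longrightarrow> 0 < r"
proof (rule ccontr)
  assume A0: "A \<noteq> 0\<^sub>m m n" and "\<not> 0 < r"
  then have "V * transpose_mat V = 0\<^sub>m n n" using V by (intro eq_matI) (auto simp: scalar_prod_def)
  then have "A = A * 0\<^sub>m n n" using mult_proj by simp
  also have "\<dots> = 0\<^sub>m m n" using A by simp
  finally show False using A0 by simp
qed

end

lemma row_space_basis_exists:
  assumes A: "A \<in> carrier_mat m n"
  shows "\<exists>V r. r \<le> m \<and> row_space_basis A m n r V"
proof -
  define us where "us = map (row A) [0..<m]"
  have "set us \<subseteq> row_space A" unfolding us_def using row_mem_row_space[OF A] by auto
  then obtain ws where ws: "set ws \<subseteq> row_space A" "orthonormal ws" "length ws \<le> length us"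
    and fixed: "\<forall>u\<in>set us. orth_proj n ws u = u"
    using orthonormal_basis_exists[OF row_space_subspace[OF A]] by blast
  have wsn: "set ws \<subseteq> carrier_vec n" using ws(1) row_space_carrier[OF A] by auto
  define r where "r = length ws"
  define V where "V = mat_of_cols n ws"
  have V: "V \<in> carrier_mat n r" unfolding V_def r_def by simp
  have VTV: "transpose_mat V * V = 1\<^sub>m r"
    unfolding V_def r_def by (rule transpose_mat_of_cols_orthonormal[OF wsn ws(2)])
  have proj: "V *\<^sub>v (transpose_mat V *\<^sub>v x) = orth_proj n ws x" if "x \<in> carrier_vec n" for x
    unfolding V_def by (rule mat_of_cols_orth_proj[OF wsn that])
  have "V *\<^sub>v c \<in> row_space A" if c: "c \<in> carrier_vec r" for c
  proof -
    have "V *\<^sub>v c = V *\<^sub>v ((transpose_mat V * V) *\<^sub>v c)" unfolding VTV using c by simp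
    also have "\<dots> = V *\<^sub>v (transpose_mat V *\<^sub>v (V *\<^sub>v c))"
      using V c by (simp add: assoc_mult_mat_vec)
    also have "\<dots> = orth_proj n ws (V *\<^sub>v c)" using V c by (intro proj) simp
    finally have "V *\<^sub>v c = orth_proj n ws (V *\<^sub>v c)" .
    then show ?thesis by (metis orth_proj_mem_subspace[OF row_space_subspace[OF A] ws(1)])
  qed
  moreover have "(V * transpose_mat V) * transpose_mat A = transpose_mat A"
  proof (rule mat_col_eqI)
    fix i assume "i < dim_col (transpose_mat A)"
    then have i: "i < m" using A by simp
    have "col ((V * transpose_mat V) * transpose_mat A) i = (V * transpose_mat V) *\<^sub>v row A i"
      using A V i by (subst col_mult2) auto
    also have "\<dots> = V *\<^sub>v (transpose_mat V *\<^sub>v row A i)"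
      using V A i by (intro assoc_mult_mat_vec) auto
    also have "\<dots> = orth_proj n ws (row A i)" using A i by (intro proj) simp
    also have "\<dots> = row A i" using fixed i unfolding us_def by simp
    finally show "col (V * transpose_mat V * transpose_mat A) i = col (transpose_mat A) i"
      using A i by simp
  qed (use A V in auto)
  ultimately have "row_space_basis A m n r V"
    using A V VTV by (intro row_space_basis.intro) simp_all
  moreover have "r \<le> m" using ws(3) unfolding r_def us_def by simp
  ultimately show ?thesis by blast
qed

lemma column_space_orthonormal_basis:
  fixes A :: "real mat"
  assumes A: "A \<in> carrier_mat m n"
  shows "\<exists>U r. r \<le> n \<and> U \<in> carrier_mat m r \<and> transpose_mat U * U = 1\<^sub>m r \<and>
    (U * transpose_mat U) * A = A"
proof -
  obtain U r where "r \<le> n" and UA: "row_space_basis (transpose_mat A) n m r U"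
    using row_space_basis_exists[of "transpose_mat A" n m] A by auto
  then show ?thesis
    using row_space_basis.V[OF UA] row_space_basis.proj_transpose[OF UA] by auto
qed

definition penrose :: "real mat \<Rightarrow> real mat \<Rightarrow> bool" where
  "penrose A X \<longleftrightarrow> X \<in> carrier_mat (dim_col A) (dim_row A) \<and>
       A * X * A = A \<and> X * A * X = X \<and>
       transpose_mat (A * X) = A * X \<and> transpose_mat (X * A) = X * A"

lemma penrose_left:
  assumes A: "A \<in> carrier_mat m n" and X: "penrose A X" and Y: "penrose A Y"
  shows "X = X * A * Y"
proof -
  have Xc: "X \<in> carrier_mat n m" and Yc: "Y \<in> carrier_mat n m"
    using X Y A unfolding penrose_def by auto
  note d = carrier_matD[OF A] carrier_matD[OF Xc] carrier_matD[OF Yc]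
  have X_factor: "X = X * (transpose_mat X * transpose_mat A)"
  proof -
    have "X = X * (A * X)" using X d unfolding penrose_def by (simp add: mult_mat_assoc)
    also have "A * X = transpose_mat X * transpose_mat A"
      using X transpose_mult[OF A Xc] unfolding penrose_def by simp
    finally show ?thesis .
  qed
  have At_factor: "transpose_mat A = transpose_mat A * (A * Y)"
  proof -
    have "transpose_mat A = transpose_mat (A * Y * A)" using Y unfolding penrose_def by simp
    also have "\<dots> = transpose_mat A * transpose_mat (A * Y)"
      using transpose_mult[of "A * Y" m m A n] A Yc by simp
    finally show ?thesis using Y unfolding penrose_def by simp
  qed
  have "X = X * (transpose_mat X * (transpose_mat A * (A * Y)))"
    using X_factor At_factor by simp
  also have "\<dots> = (X * (transpose_mat X * transpose_mat A)) * (A * Y)"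
    using d by (simp add: mult_mat_assoc)
  also have "\<dots> = X * A * Y" using X_factor[symmetric] d by (simp add: mult_mat_assoc)
  finally show ?thesis .
qed

lemma penrose_right:
  assumes A: "A \<in> carrier_mat m n" and X: "penrose A X" and Y: "penrose A Y"
  shows "Y = X * A * Y"
proof -
  have Xc: "X \<in> carrier_mat n m" and Yc: "Y \<in> carrier_mat n m"
    using X Y A unfolding penrose_def by auto
  note d = carrier_matD[OF A] carrier_matD[OF Xc] carrier_matD[OF Yc]
  have YA: "Y * A = transpose_mat A * transpose_mat Y"
    using Y transpose_mult[OF Yc A] unfolding penrose_def by simp
  have Y_factor: "Y = transpose_mat A * (transpose_mat Y * Y)"
    using Y YA d unfolding penrose_def by (metis mult_mat_assoc index_transpose_mat(2,3))
  have At_factor: "transpose_mat A = X * A * transpose_mat A"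
  proof -
    have "transpose_mat A = transpose_mat (A * (X * A))"
      using X d unfolding penrose_def by (simp add: mult_mat_assoc)
    also have "\<dots> = transpose_mat (X * A) * transpose_mat A"
      using transpose_mult[of A m n "X * A" n] A Xc by simp
    finally show ?thesis using X unfolding penrose_def by simp
  qed
  have "Y = X * A * transpose_mat A * (transpose_mat Y * Y)" using Y_factor At_factor by simp
  also have "\<dots> = X * A * (Y * A) * Y" unfolding YA using d by (simp add: mult_mat_assoc)
  also have "\<dots> = X * A * (Y * A * Y)" using d by (simp add: mult_mat_assoc)
  finally show ?thesis using Y unfolding penrose_def by simp
qed

lemma penrose_unique: "A \<in> carrier_mat m n \<Longrightarrow> penrose A X \<Longrightarrow> penrose A Y \<Longrightarrow> X = Y"
  using penrose_left penrose_right by metis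

lemma gram_mat_invertible:
  fixes B :: "real mat"
  assumes B: "B \<in> carrier_mat m r"
    and inj: "\<And>y. y \<in> carrier_vec r \<Longrightarrow> B *\<^sub>v y = 0\<^sub>v m \<Longrightarrow> y = 0\<^sub>v r"
  shows "\<exists>Gi \<in> carrier_mat r r. Gi * (transpose_mat B * B) = 1\<^sub>m r \<and>
    (transpose_mat B * B) * Gi = 1\<^sub>m r \<and> transpose_mat Gi = Gi"
proof -
  define G where "G = transpose_mat B * B"
  have G: "G \<in> carrier_mat r r" unfolding G_def using B by simp
  have "y = 0\<^sub>v r" if y: "y \<in> carrier_vec r" and Gy: "G *\<^sub>v y = 0\<^sub>v r" for y
  proof -
    have "(B *\<^sub>v y) \<bullet> (B *\<^sub>v y) = 0"
      using scalar_prod_gram_mat[OF B y] Gy y unfolding G_def by simp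
    moreover have "B *\<^sub>v y \<in> carrier_vec m" using B y by simp
    ultimately show ?thesis using inj[OF y] scalar_prod_self_eq_0_iff by blast
  qed
  then have "det G \<noteq> 0" using det_0_iff_vec_prod_zero[OF G] by auto
  from det_non_zero_imp_unit[OF G this] obtain Gi where Gi: "Gi \<in> carrier_mat r r"
    and GiG: "Gi * G = 1\<^sub>m r" and GGi: "G * Gi = 1\<^sub>m r"
    unfolding Units_def ring_mat_def by auto
  have "transpose_mat (Gi * G) = G * transpose_mat Gi"
    using transpose_mult[OF Gi G] transpose_gram_mat[OF B] unfolding G_def by simp
  then have "G * transpose_mat Gi = 1\<^sub>m r" using GiG by simp
  then have "Gi = (Gi * G) * transpose_mat Gi" using Gi G by (simp add: mult_mat_assoc)
  then have "transpose_mat Gi = Gi" using GiG Gi by simp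
  then show ?thesis using Gi GiG GGi unfolding G_def by blast
qed

lemma penrose_orthonormal_factor:
  fixes A V Gi :: "real mat"
  assumes A: "A \<in> carrier_mat m n" and V: "V \<in> carrier_mat n r" "transpose_mat V * V = 1\<^sub>m r"
    and AVV: "A * (V * transpose_mat V) = A"
    and Gi: "Gi \<in> carrier_mat r r" and GiG: "Gi * (transpose_mat (A * V) * (A * V)) = 1\<^sub>m r"
    and symGi: "transpose_mat Gi = Gi"
  shows "penrose A (V * Gi * transpose_mat (A * V))"
proof -
  define B where "B = A * V"
  have B: "B \<in> carrier_mat m r" unfolding B_def using A V by simp
  define G where "G = transpose_mat B * B"
  have G: "G \<in> carrier_mat r r" unfolding G_def using B by simp
  have GiG: "Gi * G = 1\<^sub>m r" using GiG unfolding G_def B_def .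
  note d = carrier_matD[OF A] carrier_matD[OF V(1)] carrier_matD[OF B] carrier_matD[OF G]
    carrier_matD[OF Gi]
  have symP: "transpose_mat (V * transpose_mat V) = V * transpose_mat V"
    using transpose_mult[of V n r "transpose_mat V" n] V by simp
  have BtA: "transpose_mat B * A = G * transpose_mat V"
  proof -
    have "transpose_mat B * A = transpose_mat B * (A * (V * transpose_mat V))" using AVV by simp
    also have "\<dots> = (transpose_mat B * (A * V)) * transpose_mat V" using d by (simp add: mult_mat_assoc)
    finally show ?thesis unfolding G_def B_def .
  qed
  \<comment> \<open>\<open>B\<close> has full column rank, so \<open>Gi B\<^sup>T\<close> is its pseudoinverse; then undo the change of basis \<open>V\<close>\<close>
  define X where "X = V * Gi * transpose_mat B"
  have X: "X \<in> carrier_mat n m" unfolding X_def using V Gi B by simp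
  have AX: "A * X = B * Gi * transpose_mat B"
    unfolding X_def B_def using d by (simp add: mult_mat_assoc)
  have XA: "X * A = V * transpose_mat V"
  proof -
    have "X * A = V * Gi * (transpose_mat B * A)" unfolding X_def using d by (simp add: mult_mat_assoc)
    also have "\<dots> = V * (Gi * G) * transpose_mat V" unfolding BtA using d by (simp add: mult_mat_assoc)
    finally show ?thesis unfolding GiG using V by simp
  qed
  have "A * X * A = A"
  proof -
    have "A * X * A = B * Gi * (transpose_mat B * A)" unfolding AX using d by (simp add: mult_mat_assoc)
    also have "\<dots> = B * (Gi * G) * transpose_mat V" unfolding BtA using d by (simp add: mult_mat_assoc)
    also have "\<dots> = A * (V * transpose_mat V)" unfolding GiG B_def using d V by (simp add: mult_mat_assoc)
    finally show ?thesis using AVV by simp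
  qed
  moreover have "X * A * X = X"
  proof -
    have "X * A * X = V * transpose_mat V * X" unfolding XA ..
    also have "\<dots> = V * (transpose_mat V * V) * Gi * transpose_mat B"
      unfolding X_def using d by (simp add: mult_mat_assoc)
    finally show ?thesis unfolding V(2) X_def using V Gi B by simp
  qed
  moreover have "transpose_mat (A * X) = A * X"
  proof -
    have "transpose_mat (B * Gi * transpose_mat B) = transpose_mat (transpose_mat B) * transpose_mat (B * Gi)"
      by (rule transpose_mult) (use B Gi in auto)
    also have "transpose_mat (B * Gi) = transpose_mat Gi * transpose_mat B"
      by (rule transpose_mult) (use B Gi in auto)
    finally show ?thesis unfolding AX symGi using d by (simp add: mult_mat_assoc)
  qed
  moreover have "transpose_mat (X * A) = X * A" unfolding XA by (rule symP)
  ultimately show ?thesis unfolding penrose_def X_def B_def using A V Gi by auto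
qed

lemma (in row_space_basis) penrose_exists: "\<exists>X. penrose A X"
proof -
  have "y = 0\<^sub>v r" if "y \<in> carrier_vec r" "(A * V) *\<^sub>v y = 0\<^sub>v m" for y
    using that AV_inj A V by (simp add: assoc_mult_mat_vec)
  then obtain Gi where "Gi \<in> carrier_mat r r" "Gi * (transpose_mat (A * V) * (A * V)) = 1\<^sub>m r"
    "transpose_mat Gi = Gi"
    using gram_mat_invertible[of "A * V" m r] A V by auto
  then show ?thesis using penrose_orthonormal_factor[OF A V mult_proj] by blast
qed

lemma pinv_penrose:
  assumes A: "A \<in> carrier_mat m n"
  shows "penrose A (pinv A)"
proof -
  obtain V r where "row_space_basis A m n r V" using row_space_basis_exists[OF A] by blast
  then obtain X where X: "penrose A X" using row_space_basis.penrose_exists by blast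
  have "pinv A = X" unfolding pinv_def
    by (rule the_equality, fold penrose_def, rule X, rule penrose_unique[OF A _ X], simp)
  then show ?thesis using X by simp
qed

lemma pinv_carrier: "A \<in> carrier_mat m n \<Longrightarrow> pinv A \<in> carrier_mat n m"
  using pinv_penrose[of A m n] unfolding penrose_def by simp

lemma pinv_mult_vec_solves:
  assumes A: "A \<in> carrier_mat m n" and x: "x \<in> carrier_vec n" and b: "A *\<^sub>v x = b"
  shows "A *\<^sub>v (pinv A *\<^sub>v b) = b"
proof -
  define X where "X = pinv A"
  have Xc: "X \<in> carrier_mat n m" and AXA: "A * X * A = A"
    using pinv_penrose[OF A] A unfolding X_def penrose_def by auto
  have AXc: "A * X \<in> carrier_mat m m" using A Xc by simp
  have "A *\<^sub>v (X *\<^sub>v b) = (A * X) *\<^sub>v (A *\<^sub>v x)"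
    unfolding b[symmetric] by (rule assoc_mult_mat_vec[symmetric]) (use A Xc x in auto)
  also have "\<dots> = (A * X * A) *\<^sub>v x" by (rule assoc_mult_mat_vec[symmetric, OF AXc A x])
  finally show ?thesis using AXA b by (simp add: X_def)
qed

lemma pinv_mult_vec_row_space:
  assumes A: "A \<in> carrier_mat m n" and b: "b \<in> carrier_vec m"
  shows "pinv A *\<^sub>v b \<in> row_space A"
proof -
  define X where "X = pinv A"
  have Xc: "X \<in> carrier_mat n m" and XAX: "X * A * X = X" and sym: "transpose_mat (X * A) = X * A"
    using pinv_penrose[OF A] A unfolding X_def penrose_def by auto
  have "X = (X * A) * X" using XAX by simp
  also have "X * A = transpose_mat A * transpose_mat X" using sym transpose_mult[OF Xc A] by simp
  finally have "X = transpose_mat A * (transpose_mat X * X)" using A Xc by (simp add: mult_mat_assoc)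
  then have "X *\<^sub>v b = transpose_mat A *\<^sub>v ((transpose_mat X * X) *\<^sub>v b)"
    by (metis A Xc b assoc_mult_mat_vec mult_carrier_mat transpose_carrier_mat)
  then show ?thesis unfolding row_space_def X_def using A Xc b X_def by auto
qed

lemma (in row_space_basis) rayleigh_row_space:
  assumes A0: "A \<noteq> 0\<^sub>m m n"
  shows "\<exists>\<mu>. eigenvalue (transpose_mat A * A) \<mu> \<and> \<mu> \<noteq> 0 \<and>
    (\<forall>e\<in>row_space A. \<mu> * (e \<bullet> e) \<le> (A *\<^sub>v e) \<bullet> (A *\<^sub>v e))"
proof -
  define B where "B = A * V"
  have B: "B \<in> carrier_mat m r" unfolding B_def using A V by simp
  define G where "G = transpose_mat B * B"
  have G: "G \<in> carrier_mat r r" unfolding G_def using B by simp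
  have BV: "B *\<^sub>v c = A *\<^sub>v (V *\<^sub>v c)" if "c \<in> carrier_vec r" for c
    unfolding B_def using A V that by (simp add: assoc_mult_mat_vec)
  have symG: "transpose_mat G = G" unfolding G_def by (rule transpose_gram_mat[OF B])
  \<comment> \<open>the Rayleigh bound for the Gram matrix of \<open>A V\<close>, transported along the isometry \<open>V\<close>\<close>
  obtain \<mu> where ev: "eigenvalue G \<mu>" and ray: "\<forall>c\<in>carrier_vec r. \<mu> * (c \<bullet> c) \<le> c \<bullet> (G *\<^sub>v c)"
    using sym_mat_eigenvalue_le_rayleigh[OF G pos_dim[OF A0] symG] by blast
  from ev obtain y where y: "y \<in> carrier_vec r" "y \<noteq> 0\<^sub>v r" "G *\<^sub>v y = \<mu> \<cdot>\<^sub>v y"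
    unfolding eigenvalue_def eigenvector_def using G by auto
  have "\<mu> * (y \<bullet> y) = (B *\<^sub>v y) \<bullet> (B *\<^sub>v y)"
    using scalar_prod_gram_mat[OF B y(1)] y unfolding G_def by simp
  moreover have By: "B *\<^sub>v y \<in> carrier_vec m" using B y by simp
  moreover have "B *\<^sub>v y \<noteq> 0\<^sub>v m" using AV_inj[OF y(1)] y(2) BV[OF y(1)] by auto
  ultimately have \<mu>0: "\<mu> \<noteq> 0" using scalar_prod_self_eq_0_iff by fastforce
  define z where "z = V *\<^sub>v y"
  have z: "z \<in> carrier_vec n" unfolding z_def using V y by simp
  have AtBy: "transpose_mat A *\<^sub>v (B *\<^sub>v y) \<in> row_space A"
    unfolding row_space_def using A By by auto
  have "transpose_mat V *\<^sub>v (transpose_mat A *\<^sub>v w) = transpose_mat B *\<^sub>v w"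
    if "w \<in> carrier_vec m" for w
    using transpose_mult[OF A V(1)] A V that unfolding B_def by (simp add: assoc_mult_mat_vec)
  then have "(transpose_mat A * A) *\<^sub>v z = V *\<^sub>v (G *\<^sub>v y)"
    using V_proj[OF AtBy] A B V y z BV[OF y(1)]
    unfolding G_def z_def by (simp add: assoc_mult_mat_vec)
  also have "\<dots> = \<mu> \<cdot>\<^sub>v z" unfolding y(3) z_def using V y by (simp add: mult_mat_vec)
  finally have "eigenvalue (transpose_mat A * A) \<mu>"
    using z isometry[OF y(1)] y A unfolding eigenvalue_def eigenvector_def z_def
    by (auto simp: scalar_prod_self_eq_0_iff[of _ r])
  moreover have "\<mu> * (e \<bullet> e) \<le> (A *\<^sub>v e) \<bullet> (A *\<^sub>v e)" if e: "e \<in> row_space A" for e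
  proof -
    define c where "c = transpose_mat V *\<^sub>v e"
    have c: "c \<in> carrier_vec r" unfolding c_def using V e row_space_carrier[OF A] by auto
    have ec: "e = V *\<^sub>v c" unfolding c_def using V_proj[OF e] by simp
    have "\<mu> * (e \<bullet> e) \<le> c \<bullet> (G *\<^sub>v c)" using ray c isometry[OF c] ec by simp
    also have "\<dots> = (A *\<^sub>v e) \<bullet> (A *\<^sub>v e)"
      unfolding G_def scalar_prod_gram_mat[OF B c] BV[OF c] ec ..
    finally show ?thesis .
  qed
  ultimately show ?thesis using \<mu>0 by blast
qed

lemma gram_mat_eigenvalue_nonneg:
  fixes A :: "real mat"
  assumes A: "A \<in> carrier_mat m n" and "eigenvalue (transpose_mat A * A) l"
  shows "0 \<le> l"
proof -
  obtain w where w: "w \<in> carrier_vec n" "w \<noteq> 0\<^sub>v n" "(transpose_mat A * A) *\<^sub>v w = l \<cdot>\<^sub>v w"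
    using assms unfolding eigenvalue_def eigenvector_def by auto
  have "l * (w \<bullet> w) = (A *\<^sub>v w) \<bullet> (A *\<^sub>v w)"
    using scalar_prod_gram_mat[OF A w(1)] w by simp
  then have "0 \<le> l * (w \<bullet> w)" by (simp add: scalar_prod_self_nonneg)
  moreover have "0 < w \<bullet> w" using w by (simp add: scalar_prod_self_pos_iff)
  ultimately show ?thesis by (simp add: zero_le_mult_iff)
qed

lemma sigma_min_nz_bounds:
  assumes A: "A \<in> carrier_mat m n" and A0: "A \<noteq> 0\<^sub>m m n"
  shows "0 < (sigma_min_nz A)\<^sup>2"
    and "e \<in> row_space A \<Longrightarrow> (sigma_min_nz A)\<^sup>2 * (e \<bullet> e) \<le> (A *\<^sub>v e) \<bullet> (A *\<^sub>v e)"
proof -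
  obtain V r where "row_space_basis A m n r V" using row_space_basis_exists[OF A] by blast
  then obtain \<mu> where ev: "eigenvalue (transpose_mat A * A) \<mu>" and \<mu>0: "\<mu> \<noteq> 0"
    and ray: "\<forall>e\<in>row_space A. \<mu> * (e \<bullet> e) \<le> (A *\<^sub>v e) \<bullet> (A *\<^sub>v e)"
    using row_space_basis.rayleigh_row_space[OF _ A0] by blast
  define S where "S = {l. eigenvalue (transpose_mat A * A) l \<and> l \<noteq> 0}"
  have M: "transpose_mat A * A \<in> carrier_mat n n" using A by simp
  have finS: "finite S" unfolding S_def using card_finite_spectrum(1)[OF M]
    unfolding spectrum_def by (rule rev_finite_subset) auto
  have \<mu>S: "\<mu> \<in> S" unfolding S_def using ev \<mu>0 by simp
  have Spos: "0 < l" if "l \<in> S" for l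
    using that gram_mat_eigenvalue_nonneg[OF A] unfolding S_def by force
  have min_pos: "0 < Min S" using Spos Min_in[OF finS] \<mu>S by blast
  have sig: "(sigma_min_nz A)\<^sup>2 = Min S"
    unfolding sigma_min_nz_def S_def[symmetric] using min_pos by simp
  show "0 < (sigma_min_nz A)\<^sup>2" unfolding sig by (rule min_pos)
  assume e: "e \<in> row_space A"
  have "(sigma_min_nz A)\<^sup>2 * (e \<bullet> e) \<le> \<mu> * (e \<bullet> e)"
    unfolding sig using finS \<mu>S by (intro mult_right_mono scalar_prod_self_nonneg) simp
  also have "\<dots> \<le> (A *\<^sub>v e) \<bullet> (A *\<^sub>v e)" using ray e by blast
  finally show "(sigma_min_nz A)\<^sup>2 * (e \<bullet> e) \<le> (A *\<^sub>v e) \<bullet> (A *\<^sub>v e)" .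
qed

lemma mult_unit_vec_le_spec_norm:
  assumes A: "A \<in> carrier_mat m n" and l: "l < n"
  shows "(A *\<^sub>v unit_vec n l) \<bullet> (A *\<^sub>v unit_vec n l) \<le> (spec_norm A)\<^sup>2"
proof -
  define Sset where "Sset = {vnorm (A *\<^sub>v x) | x. x \<in> carrier_vec (dim_col A) \<and> vnorm x \<le> 1}"
  have "bdd_above Sset" unfolding bdd_above_def
  proof (intro exI[of _ "sqrt (\<Sum>i<m. row A i \<bullet> row A i)"] ballI)
    fix s assume "s \<in> Sset"
    then obtain x where x: "x \<in> carrier_vec n" "vnorm x \<le> 1" "s = vnorm (A *\<^sub>v x)"
      unfolding Sset_def using A by auto
    have xx: "x \<bullet> x \<le> 1" using x(2) unfolding vnorm_def by simp
    have "(A *\<^sub>v x) \<bullet> (A *\<^sub>v x) = (\<Sum>i<m. (row A i \<bullet> x)\<^sup>2)"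
      using A scalar_prod_self_eq_sum[of "A *\<^sub>v x"] by simp
    also have "\<dots> \<le> (\<Sum>i<m. row A i \<bullet> row A i)"
    proof (rule sum_mono)
      fix i assume i: "i \<in> {..<m}"
      have "(row A i \<bullet> x)\<^sup>2 \<le> (row A i \<bullet> row A i) * (x \<bullet> x)"
        by (rule scalar_prod_Cauchy_Schwarz) (use A x in simp)
      also have "\<dots> \<le> row A i \<bullet> row A i"
        using xx scalar_prod_self_nonneg[of "row A i"] by (simp add: mult_left_le)
      finally show "(row A i \<bullet> x)\<^sup>2 \<le> row A i \<bullet> row A i" .
    qed
    finally show "s \<le> sqrt (\<Sum>i<m. row A i \<bullet> row A i)" unfolding x(3) vnorm_def by simp
  qed
  moreover have "vnorm (A *\<^sub>v unit_vec n l) \<in> Sset" unfolding Sset_def using A l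
    by (auto intro!: exI[of _ "unit_vec n l"] simp: vnorm_def)
  ultimately have "vnorm (A *\<^sub>v unit_vec n l) \<le> spec_norm A"
    unfolding spec_norm_def Sset_def by (simp add: cSup_upper)
  then have "(vnorm (A *\<^sub>v unit_vec n l))\<^sup>2 \<le> (spec_norm A)\<^sup>2"
    by (intro power_mono) (auto simp: vnorm_def scalar_prod_self_nonneg)
  then show ?thesis unfolding vnorm_square .
qed

subsection \<open>The greedy Kaczmarz iteration\<close>

lemma row_carrier_vec: "At \<in> carrier_mat d n \<Longrightarrow> row At j \<in> carrier_vec n"
  by (auto simp: row_def)

lemma csk_ratio_consistent:
  assumes At: "At \<in> carrier_mat d n" and xs: "xs \<in> carrier_vec n" and x: "x \<in> carrier_vec n"
    and j: "j < d"
  shows "csk_ratio At (At *\<^sub>v xs) x j = \<bar>row At j \<bullet> (x - xs)\<bar> / vnorm (row At j)"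
  using At j scalar_prod_minus_distrib[OF row_carrier_vec[OF At] x xs]
  unfolding csk_ratio_def by (simp add: abs_minus_commute)

lemma kaczmarz_projection_step:
  assumes a: "a \<in> carrier_vec n" "a \<noteq> 0\<^sub>v n" and xs: "xs \<in> carrier_vec n" and x: "x \<in> carrier_vec n"
  defines "x' \<equiv> x + ((a \<bullet> xs - a \<bullet> x) / (vnorm a)\<^sup>2) \<cdot>\<^sub>v a"
  shows "(x' - xs) \<bullet> (x' - xs) = (x - xs) \<bullet> (x - xs) - (a \<bullet> (x - xs))\<^sup>2 / (a \<bullet> a)"
proof -
  define e where "e = x - xs"
  have e: "e \<in> carrier_vec n" unfolding e_def using x xs by simp
  have aa: "a \<bullet> a > 0" using a by (simp add: scalar_prod_self_pos_iff)
  define c where "c = - (a \<bullet> e) / (a \<bullet> a)"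
  have "a \<bullet> xs - a \<bullet> x = - (a \<bullet> e)"
    unfolding e_def using scalar_prod_minus_distrib[OF a(1) x xs] by simp
  then have x'e: "x' - xs = e + c \<cdot>\<^sub>v a"
    unfolding x'_def c_def vnorm_square e_def using x xs a by (intro eq_vecI) auto
  have "(x' - xs) \<bullet> (x' - xs) = e \<bullet> e + 2 * c * (a \<bullet> e) + c * c * (a \<bullet> a)"
    unfolding x'e using e a comm_scalar_prod[OF e a(1)]
    by (simp add: add_scalar_prod_distrib[of _ n] scalar_prod_add_distrib[of _ n] algebra_simps)
  also have "\<dots> = e \<bullet> e - (a \<bullet> e)\<^sup>2 / (a \<bullet> a)"
    unfolding c_def using aa by (simp add: field_simps power2_eq_square)
  finally show ?thesis unfolding e_def .
qed

lemma greedy_row_bound: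
  fixes At :: "real mat"
  assumes At: "At \<in> carrier_mat d n" and e: "e \<in> carrier_vec n" and i: "i < d"
    and greedy: "\<And>j. j < d \<Longrightarrow> row At j \<noteq> 0\<^sub>v n \<Longrightarrow>
      \<bar>row At j \<bullet> e\<bar> / vnorm (row At j) \<le> \<bar>row At i \<bullet> e\<bar> / vnorm (row At i)"
  shows "(At *\<^sub>v e) \<bullet> (At *\<^sub>v e) \<le>
    (row At i \<bullet> e)\<^sup>2 / (row At i \<bullet> row At i) * (\<Sum>j<d. row At j \<bullet> row At j)"
proof -
  define \<rho> where "\<rho> = \<bar>row At i \<bullet> e\<bar> / vnorm (row At i)"
  have "(At *\<^sub>v e) \<bullet> (At *\<^sub>v e) = (\<Sum>j<d. (row At j \<bullet> e)\<^sup>2)"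
    using At scalar_prod_self_eq_sum[of "At *\<^sub>v e"] by simp
  also have "\<dots> \<le> (\<Sum>j<d. \<rho>\<^sup>2 * (row At j \<bullet> row At j))"
  proof (rule sum_mono)
    fix j assume j: "j \<in> {..<d}"
    show "(row At j \<bullet> e)\<^sup>2 \<le> \<rho>\<^sup>2 * (row At j \<bullet> row At j)"
    proof (cases "row At j = 0\<^sub>v n")
      case True
      then show ?thesis using e by (simp add: scalar_prod_self_nonneg)
    next
      case False
      have pos: "row At j \<bullet> row At j > 0"
        using False scalar_prod_self_pos_iff[OF row_carrier_vec[OF At]] by simp
      have "\<bar>row At j \<bullet> e\<bar> / vnorm (row At j) \<le> \<rho>" using greedy j False unfolding \<rho>_def by simp
      then have "(\<bar>row At j \<bullet> e\<bar> / vnorm (row At j))\<^sup>2 \<le> \<rho>\<^sup>2"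
        by (intro power_mono) (auto simp: vnorm_def scalar_prod_self_nonneg)
      then have "(row At j \<bullet> e)\<^sup>2 / (row At j \<bullet> row At j) \<le> \<rho>\<^sup>2"
        by (simp add: power_divide vnorm_square)
      then show ?thesis using pos by (simp add: divide_le_eq)
    qed
  qed
  also have "\<dots> = \<rho>\<^sup>2 * (\<Sum>j<d. row At j \<bullet> row At j)" by (simp add: sum_distrib_left)
  finally show ?thesis unfolding \<rho>_def by (simp add: power_divide vnorm_square)
qed

lemma greedy_kaczmarz_step:
  fixes At :: "real mat"
  assumes At: "At \<in> carrier_mat d n" and xs: "xs \<in> carrier_vec n" and x: "x \<in> carrier_vec n"
    and i: "i < d" and ai: "row At i \<noteq> 0\<^sub>v n"
    and greedy: "\<forall>j < d. row At j \<noteq> 0\<^sub>v n \<longrightarrow>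
      csk_ratio At (At *\<^sub>v xs) x j \<le> csk_ratio At (At *\<^sub>v xs) x i"
    and x': "x' = x + (((At *\<^sub>v xs) $ i - row At i \<bullet> x) / (vnorm (row At i))\<^sup>2) \<cdot>\<^sub>v row At i"
  shows "0 < (\<Sum>j<d. row At j \<bullet> row At j)"
    and "(x' - xs) \<bullet> (x' - xs) \<le> (x - xs) \<bullet> (x - xs)
        - ((At *\<^sub>v (x - xs)) \<bullet> (At *\<^sub>v (x - xs))) / (\<Sum>j<d. row At j \<bullet> row At j)"
proof -
  define F where "F = (\<Sum>j<d. row At j \<bullet> row At j)"
  have aa: "row At i \<bullet> row At i > 0"
    using ai scalar_prod_self_pos_iff[OF row_carrier_vec[OF At]] by simp
  show F: "0 < (\<Sum>j<d. row At j \<bullet> row At j)"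
    using i aa by (intro sum_pos2[of _ i]) (auto simp: scalar_prod_self_nonneg)
  have e: "x - xs \<in> carrier_vec n" using x xs by simp
  have "(At *\<^sub>v (x - xs)) \<bullet> (At *\<^sub>v (x - xs)) \<le>
      (row At i \<bullet> (x - xs))\<^sup>2 / (row At i \<bullet> row At i) * F"
    unfolding F_def using greedy csk_ratio_consistent[OF At xs x] i
    by (intro greedy_row_bound[OF At e i]) metis
  then have "(At *\<^sub>v (x - xs)) \<bullet> (At *\<^sub>v (x - xs)) / F \<le> (row At i \<bullet> (x - xs))\<^sup>2 / (row At i \<bullet> row At i)"
    using F unfolding F_def by (simp add: divide_le_eq)
  moreover have "(At *\<^sub>v xs) $ i = row At i \<bullet> xs" using At i by simp
  ultimately show "(x' - xs) \<bullet> (x' - xs) \<le> (x - xs) \<bullet> (x - xs)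
        - ((At *\<^sub>v (x - xs)) \<bullet> (At *\<^sub>v (x - xs))) / (\<Sum>j<d. row At j \<bullet> row At j)"
    using kaczmarz_projection_step[OF row_carrier_vec[OF At] ai xs x] unfolding x' F_def by simp
qed

definition subspace_embedding :: "real mat \<Rightarrow> real mat \<Rightarrow> real \<Rightarrow> bool" where
  "subspace_embedding S A \<epsilon> \<longleftrightarrow> (\<forall>z\<in>carrier_vec (dim_col A).
     (1 - \<epsilon>) * ((A *\<^sub>v z) \<bullet> (A *\<^sub>v z)) \<le> (S *\<^sub>v (A *\<^sub>v z)) \<bullet> (S *\<^sub>v (A *\<^sub>v z)) \<and>
     (S *\<^sub>v (A *\<^sub>v z)) \<bullet> (S *\<^sub>v (A *\<^sub>v z)) \<le> (1 + \<epsilon>) * ((A *\<^sub>v z) \<bullet> (A *\<^sub>v z)))"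

lemma sum_row_norms_eq_sum_col_norms:
  fixes At :: "real mat"
  assumes At: "At \<in> carrier_mat d n"
  shows "(\<Sum>j<d. row At j \<bullet> row At j) = (\<Sum>l<n. (At *\<^sub>v unit_vec n l) \<bullet> (At *\<^sub>v unit_vec n l))"
proof -
  have "(\<Sum>j<d. row At j \<bullet> row At j) = (\<Sum>j<d. \<Sum>l<n. (At $$ (j, l))\<^sup>2)"
    using At by (intro sum.cong refl) (auto simp: scalar_prod_self_eq_sum)
  also have "\<dots> = (\<Sum>l<n. \<Sum>j<d. (At $$ (j, l))\<^sup>2)" by (rule sum.swap)
  also have "\<dots> = (\<Sum>l<n. (At *\<^sub>v unit_vec n l) \<bullet> (At *\<^sub>v unit_vec n l))"
  proof (intro sum.cong refl)
    fix l assume l: "l \<in> {..<n}"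
    have "(At *\<^sub>v unit_vec n l) $ j = At $$ (j, l)" if "j < d" for j
      using At l that by (simp add: scalar_prod_right_unit)
    then show "(\<Sum>j<d. (At $$ (j, l))\<^sup>2) = (At *\<^sub>v unit_vec n l) \<bullet> (At *\<^sub>v unit_vec n l)"
      using At by (auto simp: scalar_prod_self_eq_sum)
  qed
  finally show ?thesis .
qed

lemma sum_row_norms_le_spec_norm:
  fixes S A :: "real mat"
  assumes S: "S \<in> carrier_mat d m" and A: "A \<in> carrier_mat m n" and emb: "subspace_embedding S A \<epsilon>"
    and \<epsilon>: "0 \<le> 1 + \<epsilon>"
  shows "(\<Sum>j<d. row (S * A) j \<bullet> row (S * A) j) \<le> (1 + \<epsilon>) * real n * (spec_norm A)\<^sup>2"
proof -
  have SA: "S * A \<in> carrier_mat d n" using S A by simp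
  have "((S * A) *\<^sub>v unit_vec n l) \<bullet> ((S * A) *\<^sub>v unit_vec n l) \<le> (1 + \<epsilon>) * (spec_norm A)\<^sup>2"
    if l: "l < n" for l
  proof -
    have "(S * A) *\<^sub>v unit_vec n l = S *\<^sub>v (A *\<^sub>v unit_vec n l)"
      using S A by (simp add: assoc_mult_mat_vec)
    then have "((S * A) *\<^sub>v unit_vec n l) \<bullet> ((S * A) *\<^sub>v unit_vec n l)
        \<le> (1 + \<epsilon>) * ((A *\<^sub>v unit_vec n l) \<bullet> (A *\<^sub>v unit_vec n l))"
      using emb A unfolding subspace_embedding_def by simp
    also have "\<dots> \<le> (1 + \<epsilon>) * (spec_norm A)\<^sup>2"
      using mult_unit_vec_le_spec_norm[OF A l] \<epsilon> by (rule mult_left_mono)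
    finally show ?thesis .
  qed
  then have "(\<Sum>l<n. ((S * A) *\<^sub>v unit_vec n l) \<bullet> ((S * A) *\<^sub>v unit_vec n l))
      \<le> (\<Sum>l<n. (1 + \<epsilon>) * (spec_norm A)\<^sup>2)" by (intro sum_mono) simp
  then show ?thesis unfolding sum_row_norms_eq_sum_col_norms[OF SA] by (simp add: mult_ac)
qed

lemma row_mult_mat:
  fixes S A :: "'a :: comm_semiring_0 mat"
  assumes "S \<in> carrier_mat d m" "A \<in> carrier_mat m n" "i < d"
  shows "row (S * A) i = transpose_mat A *\<^sub>v row S i"
  using assms by (intro eq_vecI) (auto simp: comm_scalar_prod[of _ m])

lemma csk_seq_row_space:
  assumes S: "S \<in> carrier_mat d m" and A: "A \<in> carrier_mat m n"
    and seq: "csk_seq (S * A) bt x" and x0: "x 0 \<in> row_space A"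
  shows "x k \<in> row_space A"
proof (induction k)
  case 0
  show ?case by (rule x0)
next
  case (Suc k)
  obtain i where i: "i < dim_row (S * A)" and step: "x (Suc k) = x k + (
      (bt $ i - row (S * A) i \<bullet> x k) / (vnorm (row (S * A) i))\<^sup>2) \<cdot>\<^sub>v row (S * A) i"
    using seq unfolding csk_seq_def by blast
  then have i: "i < d" using S by simp
  have "row (S * A) i \<in> row_space A"
    unfolding row_mult_mat[OF S A i] row_space_def using S A i by (auto simp: row_def)
  then show ?case using step Suc row_space_subspace[OF A] unfolding vec_subspace_def by simp
qed

lemma contraction_factor_bound:
  fixes \<epsilon> s N E Q F :: real
  assumes \<epsilon>: "0 < \<epsilon>" "\<epsilon> < 1" and n: "0 < n" and s: "0 < s" and N: "0 \<le> N" and E: "0 \<le> E"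
    and Q: "(1 - \<epsilon>) * (s * E) \<le> Q" and F: "0 < F" "F \<le> (1 + \<epsilon>) * n * N"
  shows "(1 - \<epsilon>) ^ 3 / n * (s / N) * E \<le> Q / F"
proof (cases "N = 0")
  case True
  \<comment> \<open>\<open>s / 0 = 0\<close>, so the claim degenerates to \<open>0 \<le> Q / F\<close>\<close>
  have "0 \<le> (1 - \<epsilon>) * (s * E)" using \<epsilon> s E by simp
  then have "0 \<le> Q" using Q by linarith
  then show ?thesis using True F by simp
next
  case False
  then have N: "0 < N" using N by simp
  have sE: "0 \<le> (1 - \<epsilon>) * (s * E)" using \<epsilon> s E by simp
  \<comment> \<open>the factor \<open>(1 - \<epsilon>)\<^sup>2 (1 + \<epsilon>) = (1 - \<epsilon>) (1 - \<epsilon>\<^sup>2) \<le> 1\<close> absorbs the distortion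
    of the row norms\<close>
  have "(1 - \<epsilon>) * (1 - \<epsilon>\<^sup>2) \<le> 1 * 1"
    using \<epsilon> by (intro mult_mono) (auto simp: power2_eq_square mult_le_one)
  then have "(1 - \<epsilon>)\<^sup>2 * (1 + \<epsilon>) \<le> 1" by (simp add: power2_eq_square algebra_simps)
  then have "(1 - \<epsilon>)\<^sup>2 * (1 + \<epsilon>) * ((1 - \<epsilon>) * (s * E)) \<le> 1 * ((1 - \<epsilon>) * (s * E))"
    using sE by (rule mult_right_mono)
  then have "(1 - \<epsilon>) ^ 3 * (s * E) * (1 + \<epsilon>) \<le> Q"
    using Q by (simp add: power2_eq_square power3_eq_cube algebra_simps)
  then have "(1 - \<epsilon>) ^ 3 * (s * E) * (1 + \<epsilon>) / ((1 + \<epsilon>) * n * N) \<le> Q / ((1 + \<epsilon>) * n * N)"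
    using \<epsilon> n N by (intro divide_right_mono) auto
  then have "(1 - \<epsilon>) ^ 3 * (s * E) / (n * N) \<le> Q / ((1 + \<epsilon>) * n * N)"
    using \<epsilon> by simp
  also have "\<dots> \<le> Q / F"
    using F sE Q \<epsilon> n N by (intro divide_left_mono) auto
  finally show ?thesis by (simp add: field_simps)
qed

lemma csk_seq_error_step:
  fixes S A :: "real mat"
  assumes S: "S \<in> carrier_mat d m" and A: "A \<in> carrier_mat m n"
    and xs: "xs \<in> carrier_vec n" and x: "x k \<in> carrier_vec n"
    and seq: "csk_seq (S * A) (S *\<^sub>v (A *\<^sub>v xs)) x"
  shows "0 < (\<Sum>j<d. row (S * A) j \<bullet> row (S * A) j)"
    and "(x (Suc k) - xs) \<bullet> (x (Suc k) - xs) \<le> (x k - xs) \<bullet> (x k - xs)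
      - (((S * A) *\<^sub>v (x k - xs)) \<bullet> ((S * A) *\<^sub>v (x k - xs))) / (\<Sum>j<d. row (S * A) j \<bullet> row (S * A) j)"
proof -
  define At where "At = S * A"
  have At: "At \<in> carrier_mat d n" unfolding At_def using S A by simp
  have "S *\<^sub>v (A *\<^sub>v xs) = At *\<^sub>v xs" unfolding At_def using S A xs by (simp add: assoc_mult_mat_vec)
  then obtain i where "i < d" "row At i \<noteq> 0\<^sub>v n"
    "\<forall>j < d. row At j \<noteq> 0\<^sub>v n \<longrightarrow> csk_ratio At (At *\<^sub>v xs) (x k) j \<le> csk_ratio At (At *\<^sub>v xs) (x k) i"
    "x (Suc k) = x k + (((At *\<^sub>v xs) $ i - row At i \<bullet> x k) / (vnorm (row At i))\<^sup>2) \<cdot>\<^sub>v row At i"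
    using seq carrier_matD[OF At] unfolding csk_seq_def At_def[symmetric] by metis
  from greedy_kaczmarz_step[OF At xs x this] show "0 < (\<Sum>j<d. row (S * A) j \<bullet> row (S * A) j)"
    and "(x (Suc k) - xs) \<bullet> (x (Suc k) - xs) \<le> (x k - xs) \<bullet> (x k - xs)
      - (((S * A) *\<^sub>v (x k - xs)) \<bullet> ((S * A) *\<^sub>v (x k - xs))) / (\<Sum>j<d. row (S * A) j \<bullet> row (S * A) j)"
    unfolding At_def by auto
qed

lemma csk_linear_convergence:
  fixes A S :: "real mat" and b :: "real vec" and x :: "nat \<Rightarrow> real vec"
  assumes A: "A \<in> carrier_mat m n" and A0: "A \<noteq> 0\<^sub>m m n" and S: "S \<in> carrier_mat d m"
    and b: "b \<in> carrier_vec m" and cons: "\<exists>x \<in> carrier_vec n. A *\<^sub>v x = b"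
    and \<epsilon>: "0 < \<epsilon>" "\<epsilon> < 1" and emb: "subspace_embedding S A \<epsilon>"
    and x0: "x 0 \<in> row_space A" and seq: "csk_seq (S * A) (S *\<^sub>v b) x"
  shows "(vnorm (x (Suc k) - pinv A *\<^sub>v b))\<^sup>2 \<le>
    (1 - (1 - \<epsilon>) ^ 3 / real n * ((sigma_min_nz A)\<^sup>2 / (spec_norm A)\<^sup>2)) * (vnorm (x k - pinv A *\<^sub>v b))\<^sup>2"
proof -
  define xs where "xs = pinv A *\<^sub>v b"
  have xs: "xs \<in> carrier_vec n" "A *\<^sub>v xs = b" "xs \<in> row_space A"
    using pinv_carrier[OF A] b cons pinv_mult_vec_solves[OF A] pinv_mult_vec_row_space[OF A b]
    unfolding xs_def by auto
  define e where "e = x k - xs"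
  have xk: "x k \<in> row_space A" by (rule csk_seq_row_space[OF S A seq x0])
  then have e: "e \<in> row_space A" "e \<in> carrier_vec n"
    unfolding e_def using vec_subspace_diff[OF row_space_subspace[OF A] xk xs(3)] row_space_carrier[OF A]
    by auto
  define F where "F = (\<Sum>j<d. row (S * A) j \<bullet> row (S * A) j)"
  define Q where "Q = ((S * A) *\<^sub>v e) \<bullet> ((S * A) *\<^sub>v e)"
  note step = csk_seq_error_step[OF S A xs(1) _ seq[folded xs(2)]]
  have "(1 - \<epsilon>) * ((sigma_min_nz A)\<^sup>2 * (e \<bullet> e)) \<le> (1 - \<epsilon>) * ((A *\<^sub>v e) \<bullet> (A *\<^sub>v e))"
    using sigma_min_nz_bounds(2)[OF A A0 e(1)] \<epsilon> by simp
  also have "\<dots> \<le> Q" unfolding Q_def using emb e A S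
    unfolding subspace_embedding_def by (auto simp: assoc_mult_mat_vec)
  finally have "(1 - \<epsilon>) ^ 3 / real n * ((sigma_min_nz A)\<^sup>2 / (spec_norm A)\<^sup>2) * (e \<bullet> e) \<le> Q / F"
    using \<epsilon> sigma_min_nz_bounds(1)[OF A A0] nonzero_mat_dim_col_pos[OF A A0]
      step(1)[of k] xk row_space_carrier[OF A] sum_row_norms_le_spec_norm[OF S A emb]
    unfolding F_def by (intro contraction_factor_bound) (auto simp: scalar_prod_self_nonneg)
  moreover have "(x (Suc k) - xs) \<bullet> (x (Suc k) - xs) \<le> e \<bullet> e - Q / F"
    using step(2)[of k] xk row_space_carrier[OF A] unfolding e_def Q_def F_def by auto
  ultimately show ?thesis
    unfolding vnorm_square xs_def[symmetric] e_def[symmetric] by (simp add: algebra_simps)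
qed

subsection \<open>Count sketch\<close>

definition cs_cross_term :: "nat \<Rightarrow> (nat \<Rightarrow> nat) \<Rightarrow> (nat \<Rightarrow> real) \<Rightarrow> real vec \<Rightarrow> real vec \<Rightarrow> real" where
  "cs_cross_term m h s u v =
     (\<Sum>p<m. \<Sum>q<m. if p \<noteq> q \<and> h p = h q then s p * s q * u $ p * v $ q else 0)"

lemma count_sketch_index [simp]:
  "i < d \<Longrightarrow> p < m \<Longrightarrow> count_sketch d m h s $$ (i, p) = (if h p = i then s p else 0)"
  unfolding count_sketch_def by simp

lemma count_sketch_carrier: "count_sketch d m h s \<in> carrier_mat d m"
  unfolding count_sketch_def by simp

lemma count_sketch_inner:
  assumes h: "\<forall>p<m. h p < d" and s: "\<forall>p<m. s p \<in> {-1, 1}"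
    and u: "u \<in> carrier_vec m" and v: "v \<in> carrier_vec m"
  shows "(count_sketch d m h s *\<^sub>v u) \<bullet> (count_sketch d m h s *\<^sub>v v) = u \<bullet> v + cs_cross_term m h s u v"
proof -
  define K where "K p q = s p * s q * u$p * v$q" for p q
  have S: "count_sketch d m h s \<in> carrier_mat d m" by (rule count_sketch_carrier)
  have "(count_sketch d m h s *\<^sub>v u) \<bullet> (count_sketch d m h s *\<^sub>v v)
      = (\<Sum>i<d. (\<Sum>p<m. (if h p = i then s p else 0) * u $ p) * (\<Sum>q<m. (if h q = i then s q else 0) * v $ q))"
    using S u v by (auto simp: scalar_prod_def lessThan_atLeast0 intro!: sum.cong)
  also have "\<dots> = (\<Sum>i<d. \<Sum>p<m. \<Sum>q<m. (if h p = i then (if h q = i then K p q else 0) else 0))"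
    unfolding K_def sum_product by (intro sum.cong refl, auto)
  also have "\<dots> = (\<Sum>p<m. \<Sum>q<m. \<Sum>i<d. (if h p = i then (if h q = i then K p q else 0) else 0))"
    by (subst sum.swap, subst (2) sum.swap, rule refl)
  also have "\<dots> = (\<Sum>p<m. \<Sum>q<m. (if h q = h p then K p q else 0))"
  proof (intro sum.cong refl)
    fix p q assume p: "p \<in> {..<m}"
    have "h p \<in> {..<d}" using h p by auto
    then show "(\<Sum>i<d. (if h p = i then (if h q = i then K p q else 0) else 0)) = (if h q = h p then K p q else 0)"
      by (simp add: sum.delta')
  qed
  also have "\<dots> = (\<Sum>p<m. \<Sum>q<m. (if p = q then u$p * v$p else 0) + (if p \<noteq> q \<and> h p = h q then K p q else 0))"
  proof (intro sum.cong refl)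
    fix p q assume p: "p \<in> {..<m}"
    have "s p * s p = 1" using s p by auto
    then show "(if h q = h p then K p q else 0) = (if p = q then u$p * v$p else 0) + (if p \<noteq> q \<and> h p = h q then K p q else 0)"
      unfolding K_def by auto
  qed
  also have "\<dots> = u \<bullet> v + cs_cross_term m h s u v"
    unfolding cs_cross_term_def K_def sum.distrib using v by (simp add: scalar_prod_def lessThan_atLeast0)
  finally show ?thesis .
qed

lemma cs_space_finite: "finite (cs_space d m)"
  unfolding cs_space_def by (intro finite_cartesian_product finite_PiE, auto)

lemma cs_space_memD: "(h, s) \<in> cs_space d m \<Longrightarrow> p < m \<Longrightarrow> h p < d \<and> s p \<in> {-1, 1}"
  unfolding cs_space_def by (auto simp: PiE_def Pi_def)

lemma sum_cs_space_sign_flip: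
  fixes f :: "(nat \<Rightarrow> nat) \<times> (nat \<Rightarrow> real) \<Rightarrow> real"
  assumes t: "t < m" and neg: "\<And>h s. (h, s) \<in> cs_space d m \<Longrightarrow> f (h, s(t := - s t)) = - f (h, s)"
  shows "(\<Sum>\<omega>\<in>cs_space d m. f \<omega>) = 0"
proof -
  define fl where "fl = (\<lambda>(h :: nat \<Rightarrow> nat, s :: nat \<Rightarrow> real). (h, s(t := - s t)))"
  have flin: "fl \<omega> \<in> cs_space d m" if "\<omega> \<in> cs_space d m" for \<omega>
  proof -
    obtain h s where w: "\<omega> = (h, s)" by (cases \<omega>)
    have h: "h \<in> PiE {0..<m} (\<lambda>_. {0..<d})" and s: "s \<in> PiE {0..<m} (\<lambda>_. {-1, 1 :: real})"
      using that unfolding w cs_space_def by auto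
    have "s t \<in> {-1, 1}" using s t by (auto simp: PiE_iff)
    then have "- s t \<in> {-1, 1 :: real}" by auto
    from PiE_fun_upd[of "- s t" "\<lambda>_. {-1, 1 :: real}" t s "{0..<m}", OF this s] have "s(t := - s t) \<in> PiE {0..<m} (\<lambda>_. {-1, 1 :: real})"
      using t by (simp add: insert_absorb)
    then show ?thesis unfolding w fl_def cs_space_def using h by simp
  qed
  have flfl: "fl (fl \<omega>) = \<omega>" for \<omega> unfolding fl_def by (cases \<omega>, auto)
  have bij: "bij_betw fl (cs_space d m) (cs_space d m)"
    by (rule bij_betw_byWitness[of _ fl], auto simp: flfl flin)
  have "(\<Sum>\<omega>\<in>cs_space d m. f \<omega>) = (\<Sum>\<omega>\<in>cs_space d m. f (fl \<omega>))"
    by (rule sum.reindex_bij_betw[OF bij, symmetric])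
  also have "\<dots> = (\<Sum>\<omega>\<in>cs_space d m. - f \<omega>)"
    by (intro sum.cong refl, auto simp: fl_def neg)
  finally show ?thesis by (simp add: sum_negf)
qed

lemma card_hash_collision:
  fixes m p q d :: nat
  assumes p: "p < m" and q: "q < m" and pq: "p \<noteq> q"
  shows "card {h \<in> PiE {0..<m} (\<lambda>_. {0..<d}). h p = h q} * d = card (PiE {0..<m} (\<lambda>_. {0..<d}))"
proof -
  define H where "H = PiE {0..<m} (\<lambda>_. {0..<d :: nat})"
  define H0 where "H0 = {h \<in> H. h p = h q}"
  define \<phi> where "\<phi> = (\<lambda>(h :: nat \<Rightarrow> nat, c :: nat). h(p := c))"
  define \<psi> where "\<psi> = (\<lambda>g :: nat \<Rightarrow> nat. (g(p := g q), g p))"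
  have bij: "bij_betw \<phi> (H0 \<times> {0..<d}) H"
  proof (rule bij_betw_byWitness[of _ \<psi>])
    show "\<forall>a\<in>H0 \<times> {0..<d}. \<psi> (\<phi> a) = a"
      unfolding \<phi>_def \<psi>_def H0_def using pq by (auto simp: fun_upd_idem)
    show "\<forall>a'\<in>H. \<phi> (\<psi> a') = a'" unfolding \<phi>_def \<psi>_def by auto
    show "\<phi> ` (H0 \<times> {0..<d}) \<subseteq> H"
    proof
      fix g assume "g \<in> \<phi> ` (H0 \<times> {0..<d})"
      then obtain h c where hc: "h \<in> H" "c < d" "g = h(p := c)" unfolding \<phi>_def H0_def by auto
      from PiE_fun_upd[of c "\<lambda>_. {0..<d}" p h "{0..<m}"] hc p show "g \<in> H"
        unfolding H_def by (simp add: insert_absorb)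
    qed
    show "\<psi> ` H \<subseteq> H0 \<times> {0..<d}"
    proof
      fix x assume "x \<in> \<psi> ` H"
      then obtain g where g: "g \<in> H" "x = (g(p := g q), g p)" unfolding \<psi>_def by auto
      have gq: "g q \<in> {0..<d}" and gp: "g p \<in> {0..<d}" using g p q unfolding H_def by (auto simp: PiE_iff)
      from PiE_fun_upd[of "g q" "\<lambda>_. {0..<d}" p g "{0..<m}"] gq g p have "g(p := g q) \<in> H"
        unfolding H_def by (simp add: insert_absorb)
      then show "x \<in> H0 \<times> {0..<d}" unfolding H0_def using g pq gp by auto
    qed
  qed
  have "card (H0 \<times> {0..<d}) = card H" by (rule bij_betw_same_card[OF bij])
  then show ?thesis unfolding H0_def H_def by (simp add: card_cartesian_product)
qed

lemma sum_cs_space_collision: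
  fixes m p q d :: nat
  assumes p: "p < m" and q: "q < m" and pq: "p \<noteq> q" and d: "d > 0"
  shows "(\<Sum>\<omega>\<in>cs_space d m. if fst \<omega> p = fst \<omega> q then 1 else 0) = real (card (cs_space d m)) / real d"
proof -
  define H where "H = PiE {0..<m} (\<lambda>_. {0..<d :: nat})"
  define Sg where "Sg = PiE {0..<m} (\<lambda>_. {-1, 1 :: real})"
  have "(\<Sum>\<omega>\<in>cs_space d m. if fst \<omega> p = fst \<omega> q then 1 else 0 :: real)
      = real (card {\<omega> \<in> cs_space d m. fst \<omega> p = fst \<omega> q})"
    by (simp add: sum.inter_filter[OF cs_space_finite, symmetric])
  also have "{\<omega> \<in> cs_space d m. fst \<omega> p = fst \<omega> q} = {h \<in> H. h p = h q} \<times> Sg"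
    unfolding cs_space_def H_def Sg_def by auto
  also have "card \<dots> = card {h \<in> H. h p = h q} * card Sg" by (rule card_cartesian_product)
  finally have e: "(\<Sum>\<omega>\<in>cs_space d m. if fst \<omega> p = fst \<omega> q then 1 else 0 :: real)
      = real (card {h \<in> H. h p = h q}) * real (card Sg)" by simp
  have c: "real (card {h \<in> H. h p = h q}) * real d = real (card H)"
    using arg_cong[OF card_hash_collision[OF p q pq, of d], of real] unfolding H_def of_nat_mult .
  have "card (cs_space d m) = card H * card Sg" unfolding cs_space_def H_def Sg_def
    by (rule card_cartesian_product)
  then show ?thesis unfolding e using c d by (simp add: field_simps)
qed

lemma sum_cs_space_sign_product:
  fixes m d p q p' q' :: nat
  assumes lt: "p < m" "q < m" "p' < m" "q' < m" and pq: "p \<noteq> q" "p' \<noteq> q'" and d: "d > 0"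
  shows "(\<Sum>\<omega>\<in>cs_space d m. if fst \<omega> p = fst \<omega> q \<and> fst \<omega> p' = fst \<omega> q'
           then snd \<omega> p * snd \<omega> q * snd \<omega> p' * snd \<omega> q' else 0)
         = (if (p = p' \<and> q = q') \<or> (p = q' \<and> q = p') then real (card (cs_space d m)) / real d else 0)"
proof (cases "(p = p' \<and> q = q') \<or> (p = q' \<and> q = p')")
  case True
  have "(\<Sum>\<omega>\<in>cs_space d m. if fst \<omega> p = fst \<omega> q \<and> fst \<omega> p' = fst \<omega> q'
           then snd \<omega> p * snd \<omega> q * snd \<omega> p' * snd \<omega> q' else 0)
      = (\<Sum>\<omega>\<in>cs_space d m. if fst \<omega> p = fst \<omega> q then 1 else 0)"
  proof (intro sum.cong refl)
    fix \<omega> assume w: "\<omega> \<in> cs_space d m"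
    obtain h s where hs: "\<omega> = (h, s)" by (cases \<omega>)
    have "s p \<in> {-1, 1}" "s q \<in> {-1, 1}"
      using cs_space_memD[OF w[unfolded hs]] lt by auto
    then have sp: "s p * s p = 1" and sq: "s q * s q = 1" by auto
    show "(if fst \<omega> p = fst \<omega> q \<and> fst \<omega> p' = fst \<omega> q'
           then snd \<omega> p * snd \<omega> q * snd \<omega> p' * snd \<omega> q' else 0) = (if fst \<omega> p = fst \<omega> q then 1 else 0)"
      unfolding hs using True sp sq by (auto simp: mult_ac)
  qed
  also have "\<dots> = real (card (cs_space d m)) / real d" by (rule sum_cs_space_collision[OF lt(1,2) pq(1) d])
  finally show ?thesis using True by simp
next
  case False
  define f where "f \<omega> = (if fst \<omega> p = fst \<omega> q \<and> fst \<omega> p' = fst \<omega> q'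
           then snd \<omega> p * snd \<omega> q * snd \<omega> p' * snd \<omega> q' else 0)" for \<omega> :: "(nat \<Rightarrow> nat) \<times> (nat \<Rightarrow> real)"
  \<comment> \<open>some index occurs only once among \<open>p, q, p', q'\<close>: flipping its sign negates every summand\<close>
  have "(\<Sum>\<omega>\<in>cs_space d m. f \<omega>) = 0"
  proof (cases "p \<noteq> p' \<and> p \<noteq> q'")
    case True
    show ?thesis by (rule sum_cs_space_sign_flip[OF lt(1)]) (use True pq in \<open>auto simp: f_def\<close>)
  next
    case p_paired: False
    have q_single: "q \<noteq> p' \<and> q \<noteq> q'" using p_paired False pq by auto
    show ?thesis by (rule sum_cs_space_sign_flip[OF lt(2)]) (use q_single pq in \<open>auto simp: f_def\<close>)
  qed
  then show ?thesis unfolding f_def if_not_P[OF False] .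
qed

lemma sum_pull_out_4:
  "(\<Sum>x\<in>X. \<Sum>a\<in>A. \<Sum>b\<in>B. \<Sum>c\<in>C. \<Sum>e\<in>E. f x a b c e) =
   (\<Sum>a\<in>A. \<Sum>b\<in>B. \<Sum>c\<in>C. \<Sum>e\<in>E. \<Sum>x\<in>X. f x a b c e)"
  by (subst sum.swap, rule sum.cong[OF refl], subst sum.swap, rule sum.cong[OF refl],
      subst sum.swap, rule sum.cong[OF refl], subst sum.swap, rule refl)

lemma sum_two_deltas:
  fixes X Y :: real and p q m :: nat
  assumes "p < m" "q < m"
  shows "(\<Sum>p'<m. \<Sum>q'<m. (if p' = p \<and> q' = q then X else 0) + (if p' = q \<and> q' = p then Y else 0)) = X + Y"
proof -
  have "(\<Sum>p'<m. \<Sum>q'<m. (if p' = p \<and> q' = q then X else 0) + (if p' = q \<and> q' = p then Y else 0))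
     = (\<Sum>p'<m. (if p' = p then X else 0) + (if p' = q then Y else 0))"
  proof (intro sum.cong refl)
    fix p' assume "p' \<in> {..<m}"
    have "(\<Sum>q'<m. (if p' = p \<and> q' = q then X else 0) + (if p' = q \<and> q' = p then Y else 0))
      = (\<Sum>q'<m. (if q' = q then (if p' = p then X else 0) else 0) + (if q' = p then (if p' = q then Y else 0) else 0))"
      by (intro sum.cong refl, auto)
    also have "\<dots> = (if p' = p then X else 0) + (if p' = q then Y else 0)"
      using assms by (simp add: sum.distrib)
    finally show "(\<Sum>q'<m. (if p' = p \<and> q' = q then X else 0) + (if p' = q \<and> q' = p then Y else 0)) = (if p' = p then X else 0) + (if p' = q then Y else 0)" .
  qed
  also have "\<dots> = X + Y" using assms by (simp add: sum.distrib)
  finally show ?thesis .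
qed

lemma sum_pairings:
  fixes c :: "nat \<Rightarrow> nat \<Rightarrow> nat \<Rightarrow> nat \<Rightarrow> real"
  shows "(\<Sum>p<m. \<Sum>p'<m. \<Sum>q<m. \<Sum>q'<m.
      if p \<noteq> q \<and> p' \<noteq> q' \<and> ((p = p' \<and> q = q') \<or> (p = q' \<and> q = p')) then c p q p' q' else 0)
    = (\<Sum>p<m. \<Sum>q<m. if p \<noteq> q then c p q p q + c p q q p else 0)"
proof -
  have "(\<Sum>p<m. \<Sum>p'<m. \<Sum>q<m. \<Sum>q'<m.
      if p \<noteq> q \<and> p' \<noteq> q' \<and> ((p = p' \<and> q = q') \<or> (p = q' \<and> q = p')) then c p q p' q' else 0)
    = (\<Sum>p<m. \<Sum>q<m. \<Sum>p'<m. \<Sum>q'<m.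
      if p \<noteq> q \<and> p' \<noteq> q' \<and> ((p = p' \<and> q = q') \<or> (p = q' \<and> q = p')) then c p q p' q' else 0)"
    by (rule sum.cong[OF refl], rule sum.swap)
  also have "\<dots> = (\<Sum>p<m. \<Sum>q<m. if p \<noteq> q then c p q p q + c p q q p else 0)"
  proof (intro sum.cong refl)
    fix p q assume lt: "p \<in> {..<m}" "q \<in> {..<m}"
    show "(\<Sum>p'<m. \<Sum>q'<m. if p \<noteq> q \<and> p' \<noteq> q' \<and> ((p = p' \<and> q = q') \<or> (p = q' \<and> q = p'))
        then c p q p' q' else 0) = (if p \<noteq> q then c p q p q + c p q q p else 0)"
    proof (cases "p = q")
      case False
      have "(\<Sum>p'<m. \<Sum>q'<m. if p \<noteq> q \<and> p' \<noteq> q' \<and> ((p = p' \<and> q = q') \<or> (p = q' \<and> q = p'))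
          then c p q p' q' else 0)
         = (\<Sum>p'<m. \<Sum>q'<m. (if p' = p \<and> q' = q then c p q p q else 0) + (if p' = q \<and> q' = p then c p q q p else 0))"
        using False by (intro sum.cong refl) auto
      also have "\<dots> = c p q p q + c p q q p" using lt by (intro sum_two_deltas) auto
      finally show ?thesis using False by simp
    qed simp
  qed
  finally show ?thesis .
qed

lemma sum_cross_term_sq:
  fixes u v :: "real vec"
  assumes d: "d > 0"
  shows "(\<Sum>\<omega>\<in>cs_space d m. (cs_cross_term m (fst \<omega>) (snd \<omega>) u v)\<^sup>2) =
    real (card (cs_space d m)) / real d *
      (\<Sum>p<m. \<Sum>q<m. if p \<noteq> q then (u $ p)\<^sup>2 * (v $ q)\<^sup>2 + u $ p * v $ q * u $ q * v $ p else 0)"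
proof -
  define \<Omega> where "\<Omega> = cs_space d m"
  define K where "K = real (card \<Omega>) / real d"
  define a where "a \<omega> p q = (if p \<noteq> q \<and> fst \<omega> p = fst \<omega> q then snd \<omega> p * snd \<omega> q * u $ p * v $ q else 0)"
    for \<omega> :: "(nat \<Rightarrow> nat) \<times> (nat \<Rightarrow> real)" and p q
  define c where "c p q p' q' = u $ p * v $ q * u $ p' * v $ q'" for p q p' q'
  define T where "T p q p' q' = (\<Sum>\<omega>\<in>\<Omega>. if fst \<omega> p = fst \<omega> q \<and> fst \<omega> p' = fst \<omega> q'
           then snd \<omega> p * snd \<omega> q * snd \<omega> p' * snd \<omega> q' else 0)" for p q p' q'
  have sq: "(cs_cross_term m (fst \<omega>) (snd \<omega>) u v)\<^sup>2 = (\<Sum>p<m. \<Sum>p'<m. \<Sum>q<m. \<Sum>q'<m. a \<omega> p q * a \<omega> p' q')"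
    for \<omega> unfolding cs_cross_term_def a_def power2_eq_square sum_product ..
  have "(\<Sum>\<omega>\<in>\<Omega>. (cs_cross_term m (fst \<omega>) (snd \<omega>) u v)\<^sup>2)
      = (\<Sum>p<m. \<Sum>p'<m. \<Sum>q<m. \<Sum>q'<m. \<Sum>\<omega>\<in>\<Omega>. a \<omega> p q * a \<omega> p' q')"
    unfolding sq by (rule sum_pull_out_4)
  also have "\<dots> = (\<Sum>p<m. \<Sum>p'<m. \<Sum>q<m. \<Sum>q'<m. if p \<noteq> q \<and> p' \<noteq> q' then c p q p' q' * T p q p' q' else 0)"
  proof (intro sum.cong refl)
    fix p p' q q'
    have "a \<omega> p q * a \<omega> p' q' = (if p \<noteq> q \<and> p' \<noteq> q' then c p q p' q' * (if fst \<omega> p = fst \<omega> q \<and> fst \<omega> p' = fst \<omega> q'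
           then snd \<omega> p * snd \<omega> q * snd \<omega> p' * snd \<omega> q' else 0) else 0)" for \<omega>
      unfolding a_def c_def by (auto simp: mult_ac)
    then show "(\<Sum>\<omega>\<in>\<Omega>. a \<omega> p q * a \<omega> p' q') = (if p \<noteq> q \<and> p' \<noteq> q' then c p q p' q' * T p q p' q' else 0)"
      unfolding T_def by (simp add: sum_distrib_left)
  qed
  \<comment> \<open>only the pairings \<open>{p', q'} = {p, q}\<close> survive the expectation over the signs\<close>
  also have "\<dots> = (\<Sum>p<m. \<Sum>p'<m. \<Sum>q<m. \<Sum>q'<m. if p \<noteq> q \<and> p' \<noteq> q' \<and> ((p = p' \<and> q = q') \<or> (p = q' \<and> q = p')) then c p q p' q' * K else 0)"
  proof (intro sum.cong refl)
    fix p p' q q' assume lt: "p \<in> {..<m}" "p' \<in> {..<m}" "q \<in> {..<m}" "q' \<in> {..<m}"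
    show "(if p \<noteq> q \<and> p' \<noteq> q' then c p q p' q' * T p q p' q' else 0) =
      (if p \<noteq> q \<and> p' \<noteq> q' \<and> ((p = p' \<and> q = q') \<or> (p = q' \<and> q = p')) then c p q p' q' * K else 0)"
    proof (cases "p \<noteq> q \<and> p' \<noteq> q'")
      case True
      have "T p q p' q' = (if (p = p' \<and> q = q') \<or> (p = q' \<and> q = p') then K else 0)"
        unfolding T_def K_def \<Omega>_def using sum_cs_space_sign_product[of p m q p' q' d] lt True d by auto
      then show ?thesis using True by auto
    qed auto
  qed
  also have "\<dots> = (\<Sum>p<m. \<Sum>q<m. if p \<noteq> q then c p q p q * K + c p q q p * K else 0)"
    by (rule sum_pairings)
  also have "\<dots> = K * (\<Sum>p<m. \<Sum>q<m. if p \<noteq> q then (u $ p)\<^sup>2 * (v $ q)\<^sup>2 + u $ p * v $ q * u $ q * v $ p else 0)"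
    unfolding sum_distrib_left by (intro sum.cong refl) (auto simp: c_def power2_eq_square algebra_simps)
  finally show ?thesis unfolding K_def \<Omega>_def .
qed

lemma sum_off_diagonal_le:
  fixes u v :: "nat \<Rightarrow> real"
  shows "(\<Sum>p<m. \<Sum>q<m. if p \<noteq> q then (u p)\<^sup>2 * (v q)\<^sup>2 + u p * v q * u q * v p else 0)
    \<le> 2 * (\<Sum>p<m. (u p)\<^sup>2) * (\<Sum>q<m. (v q)\<^sup>2)"
proof -
  define w where "w p = u p * v p" for p
  have "(\<Sum>p<m. \<Sum>q<m. if p \<noteq> q then (u p)\<^sup>2 * (v q)\<^sup>2 else 0) \<le> (\<Sum>p<m. \<Sum>q<m. (u p)\<^sup>2 * (v q)\<^sup>2)"
    by (intro sum_mono) auto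
  also have "\<dots> = (\<Sum>p<m. (u p)\<^sup>2) * (\<Sum>q<m. (v q)\<^sup>2)" by (simp only: sum_product)
  finally have diag: "(\<Sum>p<m. \<Sum>q<m. if p \<noteq> q then (u p)\<^sup>2 * (v q)\<^sup>2 else 0)
    \<le> (\<Sum>p<m. (u p)\<^sup>2) * (\<Sum>q<m. (v q)\<^sup>2)" .
  \<comment> \<open>the off-diagonal part of \<open>(\<Sum>p. u p v p)\<^sup>2\<close>, bounded by Cauchy--Schwarz\<close>
  have "(\<Sum>p<m. \<Sum>q<m. if p \<noteq> q then u p * v q * u q * v p else 0)
      = (\<Sum>p<m. \<Sum>q<m. w p * w q - (if p = q then (w p)\<^sup>2 else 0))"
    unfolding w_def by (intro sum.cong refl) (auto simp: power2_eq_square mult_ac)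
  also have "\<dots> = (\<Sum>p<m. w p)\<^sup>2 - (\<Sum>p<m. (w p)\<^sup>2)"
    by (simp add: sum_subtractf power2_eq_square sum_product)
  also have "\<dots> \<le> (\<Sum>p<m. w p)\<^sup>2" by (simp add: sum_nonneg)
  also have "\<dots> \<le> (\<Sum>p<m. (u p)\<^sup>2) * (\<Sum>q<m. (v q)\<^sup>2)"
    unfolding w_def using Cauchy_Schwarz_ineq_sum[of u v "{..<m}"] by (simp add: power2_eq_square)
  finally have off: "(\<Sum>p<m. \<Sum>q<m. if p \<noteq> q then u p * v q * u q * v p else 0)
    \<le> (\<Sum>p<m. (u p)\<^sup>2) * (\<Sum>q<m. (v q)\<^sup>2)" .
  have "(\<Sum>p<m. \<Sum>q<m. if p \<noteq> q then (u p)\<^sup>2 * (v q)\<^sup>2 + u p * v q * u q * v p else 0)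
    = (\<Sum>p<m. \<Sum>q<m. (if p \<noteq> q then (u p)\<^sup>2 * (v q)\<^sup>2 else 0)
                     + (if p \<noteq> q then u p * v q * u q * v p else 0))"
    by (intro sum.cong refl) simp
  also have "\<dots> = (\<Sum>p<m. \<Sum>q<m. if p \<noteq> q then (u p)\<^sup>2 * (v q)\<^sup>2 else 0)
      + (\<Sum>p<m. \<Sum>q<m. if p \<noteq> q then u p * v q * u q * v p else 0)"
    by (simp only: sum.distrib)
  finally show ?thesis using diag off by simp
qed

lemma cross_term_second_moment:
  fixes u v :: "real vec"
  assumes u: "u \<in> carrier_vec m" and v: "v \<in> carrier_vec m" and d: "d > 0"
  shows "(\<Sum>\<omega>\<in>cs_space d m. (cs_cross_term m (fst \<omega>) (snd \<omega>) u v)\<^sup>2)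
     \<le> real (card (cs_space d m)) / real d * (2 * (u \<bullet> u) * (v \<bullet> v))"
proof -
  have "(\<Sum>p<m. \<Sum>q<m. if p \<noteq> q then (u $ p)\<^sup>2 * (v $ q)\<^sup>2 + u $ p * v $ q * u $ q * v $ p else 0)
      \<le> 2 * (\<Sum>p<m. (u $ p)\<^sup>2) * (\<Sum>q<m. (v $ q)\<^sup>2)"
    by (rule sum_off_diagonal_le)
  also have "\<dots> = 2 * (u \<bullet> u) * (v \<bullet> v)" using u v by (simp add: scalar_prod_self_eq_sum)
  finally show ?thesis unfolding sum_cross_term_sq[OF d] by (intro mult_left_mono) simp_all
qed


lemma bilinear_form_le_frobenius:
  fixes c :: "real vec" and D :: "nat \<Rightarrow> nat \<Rightarrow> real"
  shows "\<bar>\<Sum>j<r. \<Sum>l<r. c$j * c$l * D j l\<bar> \<le> sqrt (\<Sum>j<r. \<Sum>l<r. (D j l)^2) * (\<Sum>j<r. (c$j)^2)"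
proof -
  let ?I = "{..<r} \<times> {..<r}"
  have e1: "(\<Sum>j<r. \<Sum>l<r. c$j * c$l * D j l) = (\<Sum>x\<in>?I. (c$fst x * c$snd x) * D (fst x) (snd x))"
    by (simp add: sum.cartesian_product split_beta)
  have e2: "(\<Sum>x\<in>?I. (c$fst x * c$snd x)^2) = (\<Sum>j<r. (c$j)^2)^2"
    by (simp add: sum.cartesian_product split_beta power2_eq_square sum_product mult_ac)
  have e3: "(\<Sum>x\<in>?I. (D (fst x) (snd x))^2) = (\<Sum>j<r. \<Sum>l<r. (D j l)^2)"
    by (simp add: sum.cartesian_product split_beta)
  have "(\<Sum>j<r. \<Sum>l<r. c$j * c$l * D j l)^2 \<le> (\<Sum>j<r. (c$j)^2)^2 * (\<Sum>j<r. \<Sum>l<r. (D j l)^2)"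
    unfolding e1 e2[symmetric] e3[symmetric] by (rule Cauchy_Schwarz_ineq_sum)
  also have "\<dots> = (sqrt (\<Sum>j<r. \<Sum>l<r. (D j l)^2) * (\<Sum>j<r. (c$j)^2))^2"
    by (simp add: power_mult_distrib sum_nonneg)
  finally have sq: "(\<Sum>j<r. \<Sum>l<r. c$j * c$l * D j l)^2 \<le> (sqrt (\<Sum>j<r. \<Sum>l<r. (D j l)^2) * (\<Sum>j<r. (c$j)^2))^2" .
  have y0: "0 \<le> sqrt (\<Sum>j<r. \<Sum>l<r. (D j l)^2) * (\<Sum>j<r. (c$j)^2)" by (simp add: sum_nonneg)
  have "\<bar>\<Sum>j<r. \<Sum>l<r. c$j * c$l * D j l\<bar>^2 \<le> (sqrt (\<Sum>j<r. \<Sum>l<r. (D j l)^2) * (\<Sum>j<r. (c$j)^2))^2"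
    using sq by simp
  from power2_le_imp_le[OF this y0] show ?thesis .
qed

lemma quadratic_form_double_sum:
  fixes M :: "real mat"
  assumes "M \<in> carrier_mat r r" "c \<in> carrier_vec r"
  shows "c \<bullet> (M *\<^sub>v c) = (\<Sum>j<r. \<Sum>l<r. c $ j * c $ l * M $$ (j, l))"
  using assms by (simp add: scalar_prod_def lessThan_atLeast0 sum_distrib_left mult_ac)

text \<open>For \<open>U\<close> with orthonormal columns, \<open>cs_distortion m U (h, s)\<close> is the squared Frobenius
  norm of \<open>(S U)\<^sup>T (S U) - I\<close>, where \<open>S = count_sketch d m h s\<close>.\<close>

definition cs_distortion :: "nat \<Rightarrow> real mat \<Rightarrow> (nat \<Rightarrow> nat) \<times> (nat \<Rightarrow> real) \<Rightarrow> real" where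
  "cs_distortion m U \<omega> =
     (\<Sum>j<dim_col U. \<Sum>l<dim_col U. (cs_cross_term m (fst \<omega>) (snd \<omega>) (col U j) (col U l))\<^sup>2)"

lemma count_sketch_gram_entry:
  fixes U :: "real mat"
  assumes U: "U \<in> carrier_mat m r" and UTU: "transpose_mat U * U = 1\<^sub>m r"
    and hs: "(h, s) \<in> cs_space d m" and j: "j < r" and l: "l < r"
  shows "(transpose_mat (count_sketch d m h s * U) * (count_sketch d m h s * U)) $$ (j, l)
    = (if j = l then 1 else 0) + cs_cross_term m h s (col U j) (col U l)"
proof -
  define S where "S = count_sketch d m h s"
  have S: "S \<in> carrier_mat d m" unfolding S_def by (rule count_sketch_carrier)
  have colU: "col U i \<in> carrier_vec m" for i using U by (simp add: col_def)
  have "(transpose_mat (S * U) * (S * U)) $$ (j, l) = col (S * U) j \<bullet> col (S * U) l"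
    using S U j l by simp
  also have "\<dots> = (S *\<^sub>v col U j) \<bullet> (S *\<^sub>v col U l)"
    using col_mult2[OF S U j] col_mult2[OF S U l] by simp
  also have "\<dots> = col U j \<bullet> col U l + cs_cross_term m h s (col U j) (col U l)"
    unfolding S_def using cs_space_memD[OF hs] by (intro count_sketch_inner colU) auto
  also have "col U j \<bullet> col U l = (transpose_mat U * U) $$ (j, l)" using U j l by simp
  finally show ?thesis unfolding UTU S_def using j l by simp
qed

lemma count_sketch_norm_expansion:
  fixes U :: "real mat"
  assumes U: "U \<in> carrier_mat m r" and UTU: "transpose_mat U * U = 1\<^sub>m r"
    and hs: "(h, s) \<in> cs_space d m" and c: "c \<in> carrier_vec r"
  defines "S \<equiv> count_sketch d m h s"
  shows "(S *\<^sub>v (U *\<^sub>v c)) \<bullet> (S *\<^sub>v (U *\<^sub>v c))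
    = c \<bullet> c + (\<Sum>j<r. \<Sum>l<r. c $ j * c $ l * cs_cross_term m h s (col U j) (col U l))"
proof -
  have S: "S \<in> carrier_mat d m" unfolding S_def by (rule count_sketch_carrier)
  define W where "W = S * U"
  have W: "W \<in> carrier_mat d r" unfolding W_def using S U by simp
  have "(S *\<^sub>v (U *\<^sub>v c)) \<bullet> (S *\<^sub>v (U *\<^sub>v c)) = c \<bullet> ((transpose_mat W * W) *\<^sub>v c)"
    unfolding W_def using scalar_prod_gram_mat[of "S * U" d r c] S U c
    by (simp add: assoc_mult_mat_vec)
  also have "\<dots> = (\<Sum>j<r. \<Sum>l<r. c $ j * c $ l * (transpose_mat W * W) $$ (j, l))"
    by (rule quadratic_form_double_sum) (use W c in auto)
  also have "\<dots> = (\<Sum>j<r. \<Sum>l<r. (if j = l then c $ j * c $ l else 0)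
      + c $ j * c $ l * cs_cross_term m h s (col U j) (col U l))"
    unfolding W_def S_def
    by (intro sum.cong refl) (auto simp: count_sketch_gram_entry[OF U UTU hs] algebra_simps)
  also have "\<dots> = c \<bullet> c + (\<Sum>j<r. \<Sum>l<r. c $ j * c $ l * cs_cross_term m h s (col U j) (col U l))"
    using c by (simp add: sum.distrib power2_eq_square scalar_prod_self_eq_sum)
  finally show ?thesis .
qed

lemma subspace_embedding_if_small_distortion:
  fixes A U :: "real mat"
  assumes A: "A \<in> carrier_mat m n" and U: "U \<in> carrier_mat m r"
    and UTU: "transpose_mat U * U = 1\<^sub>m r" and UUA: "(U * transpose_mat U) * A = A"
    and hs: "(h, s) \<in> cs_space d m" and \<epsilon>: "0 \<le> \<epsilon>"
    and small: "cs_distortion m U (h, s) \<le> \<epsilon>\<^sup>2"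
  shows "subspace_embedding (count_sketch d m h s) A \<epsilon>"
  unfolding subspace_embedding_def
proof (intro ballI)
  fix z :: "real vec" assume "z \<in> carrier_vec (dim_col A)"
  then have z: "z \<in> carrier_vec n" using A by simp
  define S where "S = count_sketch d m h s"
  define c where "c = transpose_mat U *\<^sub>v (A *\<^sub>v z)"
  have c: "c \<in> carrier_vec r" unfolding c_def using U A z by simp
  have Az: "A *\<^sub>v z = U *\<^sub>v c"
  proof -
    have "A *\<^sub>v z = ((U * transpose_mat U) * A) *\<^sub>v z" unfolding UUA ..
    also have "\<dots> = (U * transpose_mat U) *\<^sub>v (A *\<^sub>v z)" by (rule assoc_mult_mat_vec) (use U A z in auto)
    also have "\<dots> = U *\<^sub>v c" unfolding c_def by (rule assoc_mult_mat_vec) (use U A z in auto)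
    finally show ?thesis .
  qed
  have cc: "(A *\<^sub>v z) \<bullet> (A *\<^sub>v z) = c \<bullet> c" using scalar_prod_gram_mat[OF U c] UTU c Az by simp
  define D where "D j l = cs_cross_term m h s (col U j) (col U l)" for j l
  define R where "R = (\<Sum>j<r. \<Sum>l<r. c $ j * c $ l * D j l)"
  have SS: "(S *\<^sub>v (A *\<^sub>v z)) \<bullet> (S *\<^sub>v (A *\<^sub>v z)) = c \<bullet> c + R"
    unfolding Az S_def R_def D_def by (rule count_sketch_norm_expansion[OF U UTU hs c])
  have "sqrt (\<Sum>j<r. \<Sum>l<r. (D j l)\<^sup>2) \<le> \<epsilon>"
    using small \<epsilon> U unfolding D_def cs_distortion_def by (simp add: real_le_lsqrt)
  then have "sqrt (\<Sum>j<r. \<Sum>l<r. (D j l)\<^sup>2) * (c \<bullet> c) \<le> \<epsilon> * (c \<bullet> c)"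
    by (intro mult_right_mono scalar_prod_self_nonneg)
  then have "\<bar>R\<bar> \<le> \<epsilon> * (c \<bullet> c)"
    using bilinear_form_le_frobenius[of c D r] c unfolding R_def by (simp add: scalar_prod_self_eq_sum)
  then show "(1 - \<epsilon>) * ((A *\<^sub>v z) \<bullet> (A *\<^sub>v z)) \<le> (S *\<^sub>v (A *\<^sub>v z)) \<bullet> (S *\<^sub>v (A *\<^sub>v z)) \<and>
    (S *\<^sub>v (A *\<^sub>v z)) \<bullet> (S *\<^sub>v (A *\<^sub>v z)) \<le> (1 + \<epsilon>) * ((A *\<^sub>v z) \<bullet> (A *\<^sub>v z))"
    unfolding SS cc by (auto simp: algebra_simps abs_le_iff)
qed

lemma card_large_distortion:
  fixes U :: "real mat"
  assumes U: "U \<in> carrier_mat m r" and UTU: "transpose_mat U * U = 1\<^sub>m r" and rn: "r \<le> n"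
    and d: "d > 0"
  shows "real (card {\<omega> \<in> cs_space d m. \<not> cs_distortion m U \<omega> \<le> \<epsilon>\<^sup>2}) * \<epsilon>\<^sup>2
     \<le> real (card (cs_space d m)) * (2 * (real n)\<^sup>2) / real d"
proof -
  define \<Omega> where "\<Omega> = cs_space d m"
  define Z where "Z = cs_distortion m U"
  define K where "K = real (card \<Omega>) / real d"
  have Z0: "Z \<omega> \<ge> 0" for \<omega> unfolding Z_def cs_distortion_def by (simp add: sum_nonneg)
  have colU: "col U j \<in> carrier_vec m" for j using U by (simp add: col_def)
  have uu: "col U j \<bullet> col U j = 1" if "j < r" for j
    using arg_cong[OF UTU, of "\<lambda>M. M $$ (j, j)"] U that by simp
  \<comment> \<open>Markov's inequality, with the expectation of \<open>Z\<close> from the second moments of the cross terms\<close>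
  have "(\<Sum>\<omega>\<in>\<Omega>. Z \<omega>) = (\<Sum>j<r. \<Sum>l<r. \<Sum>\<omega>\<in>\<Omega>. (cs_cross_term m (fst \<omega>) (snd \<omega>) (col U j) (col U l))\<^sup>2)"
    unfolding Z_def cs_distortion_def carrier_matD(2)[OF U]
    by (subst sum.swap, rule sum.cong[OF refl], rule sum.swap)
  also have "\<dots> \<le> (\<Sum>j<r. \<Sum>l<r. K * (2 * (col U j \<bullet> col U j) * (col U l \<bullet> col U l)))"
    unfolding K_def \<Omega>_def by (intro sum_mono cross_term_second_moment colU d)
  also have "\<dots> = 2 * K * (real r)\<^sup>2" by (simp add: uu power2_eq_square)
  also have "\<dots> \<le> 2 * K * (real n)\<^sup>2" using rn unfolding K_def by (intro mult_left_mono) auto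
  finally have sumZ: "(\<Sum>\<omega>\<in>\<Omega>. Z \<omega>) \<le> 2 * K * (real n)\<^sup>2" .
  define bad where "bad = {\<omega> \<in> \<Omega>. \<not> Z \<omega> \<le> \<epsilon>\<^sup>2}"
  have "real (card bad) * \<epsilon>\<^sup>2 = (\<Sum>\<omega>\<in>bad. \<epsilon>\<^sup>2)" by simp
  also have "\<dots> \<le> (\<Sum>\<omega>\<in>bad. Z \<omega>)" by (intro sum_mono) (auto simp: bad_def)
  also have "\<dots> \<le> (\<Sum>\<omega>\<in>\<Omega>. Z \<omega>)"
    unfolding \<Omega>_def by (rule sum_mono2[OF cs_space_finite]) (auto simp: bad_def Z0 \<Omega>_def)
  finally show ?thesis using sumZ unfolding bad_def Z_def \<Omega>_def K_def by (simp add: field_simps)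
qed

lemma card_small_distortion:
  fixes U :: "real mat"
  assumes U: "U \<in> carrier_mat m r" and UTU: "transpose_mat U * U = 1\<^sub>m r" and rn: "r \<le> n"
    and \<delta>: "0 < \<delta>" and \<epsilon>: "0 < \<epsilon>" and n: "0 < n"
    and d: "2 * (real n)\<^sup>2 / (\<delta> * \<epsilon>\<^sup>2) \<le> real d"
  shows "(1 - \<delta>) * real (card (cs_space d m)) \<le> real (card {\<omega> \<in> cs_space d m. cs_distortion m U \<omega> \<le> \<epsilon>\<^sup>2})"
proof -
  define \<Omega> where "\<Omega> = cs_space d m"
  define good where "good = {\<omega> \<in> \<Omega>. cs_distortion m U \<omega> \<le> \<epsilon>\<^sup>2}"
  define bad where "bad = {\<omega> \<in> \<Omega>. \<not> cs_distortion m U \<omega> \<le> \<epsilon>\<^sup>2}"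
  have pos: "0 < 2 * (real n)\<^sup>2 / (\<delta> * \<epsilon>\<^sup>2)" using n \<delta> \<epsilon> by simp
  then have d0: "0 < d" using d by simp
  have "2 * (real n)\<^sup>2 / real d \<le> \<delta> * \<epsilon>\<^sup>2" using d pos \<delta> \<epsilon> d0 by (simp add: field_simps)
  then have "real (card \<Omega>) * (2 * (real n)\<^sup>2 / real d) \<le> real (card \<Omega>) * (\<delta> * \<epsilon>\<^sup>2)"
    by (rule mult_left_mono) simp
  then have "real (card \<Omega>) * (2 * (real n)\<^sup>2) / real d \<le> (\<delta> * real (card \<Omega>)) * \<epsilon>\<^sup>2"
    by (simp add: mult_ac)
  then have "real (card bad) * \<epsilon>\<^sup>2 \<le> (\<delta> * real (card \<Omega>)) * \<epsilon>\<^sup>2"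
    using card_large_distortion[OF U UTU rn d0, of \<epsilon>] unfolding bad_def \<Omega>_def by linarith
  then have "real (card bad) \<le> \<delta> * real (card \<Omega>)" using \<epsilon> by simp
  moreover have "good \<union> bad = \<Omega>" "good \<inter> bad = {}" unfolding good_def bad_def by auto
  then have "card good + card bad = card \<Omega>"
    using card_Un_disjoint[of good bad] finite_subset[OF _ cs_space_finite[of d m]]
    unfolding \<Omega>_def by (metis Un_upper1 Un_upper2)
  ultimately show ?thesis unfolding good_def \<Omega>_def by (simp add: algebra_simps)
qed

lemma cs_space_nonempty: "0 < d \<Longrightarrow> cs_space d m \<noteq> {}"
  unfolding cs_space_def
  by (auto simp: PiE_eq_empty_iff)

lemma prob_pmf_of_set_ge_card:
  assumes "finite \<Omega>" "\<Omega> \<noteq> {}" "G \<subseteq> \<Omega> \<inter> E"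
  shows "real (card G) / real (card \<Omega>) \<le> measure_pmf.prob (pmf_of_set \<Omega>) E"
proof -
  have "card G \<le> card (\<Omega> \<inter> E)" using assms by (intro card_mono) auto
  then show ?thesis using assms by (simp add: measure_pmf_of_set divide_right_mono)
qed

lemma csk_convergence_probability:
  fixes A :: "real mat" and b x0 :: "real vec"
  assumes A: "A \<in> carrier_mat m n" and A0: "A \<noteq> 0\<^sub>m m n" and b: "b \<in> carrier_vec m"
    and cons: "\<exists>x \<in> carrier_vec n. A *\<^sub>v x = b" and \<delta>: "0 < \<delta>" and \<epsilon>: "0 < \<epsilon>" "\<epsilon> < 1"
    and d: "2 * (real n)\<^sup>2 / (\<delta> * \<epsilon>\<^sup>2) \<le> real d" and x0: "x0 \<in> row_space A"
  shows "1 - \<delta> \<le> measure_pmf.prob (pmf_of_set (cs_space d m))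
      {(h, s) \<in> cs_space d m.
         \<forall>x. x 0 = x0 \<longrightarrow>
           csk_seq (count_sketch d m h s * A) (count_sketch d m h s *\<^sub>v b) x \<longrightarrow>
           (\<forall>k. (vnorm (x (Suc k) - pinv A *\<^sub>v b))\<^sup>2 \<le>
                 (1 - (1 - \<epsilon>)^3 / real n * ((sigma_min_nz A)\<^sup>2 / (spec_norm A)\<^sup>2))
                 * (vnorm (x k - pinv A *\<^sub>v b))\<^sup>2)}"
    (is "_ \<le> measure_pmf.prob _ ?E")
proof -
  have n: "0 < n" by (rule nonzero_mat_dim_col_pos[OF A A0])
  then have "0 < 2 * (real n)\<^sup>2 / (\<delta> * \<epsilon>\<^sup>2)" using \<delta> \<epsilon> by simp
  then have d0: "0 < d" using d by simp
  obtain U r where rn: "r \<le> n"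
    and U: "U \<in> carrier_mat m r" "transpose_mat U * U = 1\<^sub>m r" "(U * transpose_mat U) * A = A"
    using column_space_orthonormal_basis[OF A] by blast
  define good where "good = {\<omega> \<in> cs_space d m. cs_distortion m U \<omega> \<le> \<epsilon>\<^sup>2}"
  have "good \<subseteq> ?E"
  proof
    fix \<omega> assume "\<omega> \<in> good"
    moreover obtain h s where \<omega>: "\<omega> = (h, s)" by fastforce
    ultimately have hs: "(h, s) \<in> cs_space d m" and "cs_distortion m U (h, s) \<le> \<epsilon>\<^sup>2"
      unfolding good_def by auto
    then have emb: "subspace_embedding (count_sketch d m h s) A \<epsilon>"
      using \<epsilon> by (intro subspace_embedding_if_small_distortion[OF A U]) auto
    have "\<forall>x. x 0 = x0 \<longrightarrow>
           csk_seq (count_sketch d m h s * A) (count_sketch d m h s *\<^sub>v b) x \<longrightarrow>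
           (\<forall>k. (vnorm (x (Suc k) - pinv A *\<^sub>v b))\<^sup>2 \<le>
                 (1 - (1 - \<epsilon>)^3 / real n * ((sigma_min_nz A)\<^sup>2 / (spec_norm A)\<^sup>2))
                 * (vnorm (x k - pinv A *\<^sub>v b))\<^sup>2)"
      using csk_linear_convergence[OF A A0 count_sketch_carrier b cons \<epsilon> emb] x0 by simp
    then show "\<omega> \<in> ?E" unfolding \<omega> using hs by simp
  qed
  then have "good \<subseteq> cs_space d m \<inter> ?E" unfolding good_def by auto
  then have "real (card good) / real (card (cs_space d m)) \<le> measure_pmf.prob (pmf_of_set (cs_space d m)) ?E"
    by (intro prob_pmf_of_set_ge_card cs_space_finite cs_space_nonempty d0)
  moreover have "1 - \<delta> \<le> real (card good) / real (card (cs_space d m))"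
    using card_small_distortion[OF U(1,2) rn \<delta> \<epsilon>(1) n d] cs_space_finite[of d m] cs_space_nonempty[OF d0]
    unfolding good_def by (simp add: le_divide_eq card_gt_0_iff)
  ultimately show ?thesis by linarith
qed

theorem theorem2p1:
  "\<exists>C > (0::real). \<forall>(m::nat) (n::nat) (d::nat) (A::real mat) (b::real vec)
      (\<delta>::real) (\<epsilon>::real) (x0::real vec).
    A \<in> carrier_mat m n \<longrightarrow> A \<noteq> 0\<^sub>m m n \<longrightarrow>
    b \<in> carrier_vec m \<longrightarrow> (\<exists>x \<in> carrier_vec n. A *\<^sub>v x = b) \<longrightarrow>
    0 < \<delta> \<longrightarrow> \<delta> < 1 \<longrightarrow> 0 < \<epsilon> \<longrightarrow> \<epsilon> < 1 \<longrightarrow>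
    real d \<ge> C * (real n)\<^sup>2 / (\<delta> * \<epsilon>\<^sup>2) \<longrightarrow> d < m \<longrightarrow>
    x0 \<in> row_space A \<longrightarrow>
    measure_pmf.prob (pmf_of_set (cs_space d m))
      {(h, s) \<in> cs_space d m.
         \<forall>x. x 0 = x0 \<longrightarrow>
           csk_seq (count_sketch d m h s * A) (count_sketch d m h s *\<^sub>v b) x \<longrightarrow>
           (\<forall>k. (vnorm (x (Suc k) - pinv A *\<^sub>v b))\<^sup>2 \<le>
                 (1 - (1 - \<epsilon>)^3 / real n * ((sigma_min_nz A)\<^sup>2 / (spec_norm A)\<^sup>2))
                 * (vnorm (x k - pinv A *\<^sub>v b))\<^sup>2)}
      \<ge> 1 - 2 * \<delta>"
  by (intro exI[of _ "2 :: real"] conjI allI impI order_trans[OF _ csk_convergence_probability]) simp_all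

end
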